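(* Let $(M,g)$ be a space-time of dimension $n>3$ carrying two smooth vector fields $u,w$ with $u^ku_k=w^kw_k=-1$, $(u^kw_k)^2\neq1$, $\nabla_iu_j=\varphi(u_iu_j+g_{ij})$ and $\nabla_iw_j=\lambda(w_iw_j+g_{ij})$ for scalar fields $\varphi,\lambda$. If $\nabla_i\varphi=-u_i\,u^k\nabla_k\varphi$, then $\nabla_i\lambda=-w_i\,w^k\nabla_k\lambda$.
   Context: A space-time is a Lorentzian manifold with metric of signature $(-,+,\dots,+)$; $\nabla$ is its Levi-Civita connection. *)

theory Defs
  imports "HOL-Analysis.Analysis"
begin

text \<open>Local-coordinate rendering of a space-time: a chart domain U (open in R^n)
  with a smooth Lorentzian metric g. Indices range over the finite type 'n.\<close>

definition partial :: "'n::finite \<Rightarrow> (real^'n \<Rightarrow> real) \<Rightarrow> real^'n \<Rightarrow> real" where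
  "partial i f x = frechet_derivative f (at x) (axis i 1)"

fun Ck :: "nat \<Rightarrow> (real^'n::finite) set \<Rightarrow> (real^'n \<Rightarrow> real) \<Rightarrow> bool" where
  "Ck 0 U f = continuous_on U f"
| "Ck (Suc k) U f = (f differentiable_on U \<and> (\<forall>i. Ck k U (partial i f)))"

definition smooth_on :: "(real^'n::finite) set \<Rightarrow> (real^'n \<Rightarrow> real) \<Rightarrow> bool" where
  "smooth_on U f = (\<forall>k. Ck k U f)"

definition lorentzian :: "real^('n::finite)^'n \<Rightarrow> bool" where
  "lorentzian G = (transpose G = G \<and>
     (\<exists>(P::real^'n^'n) i0. invertible P \<and>
        transpose P ** G ** P = (\<chi> i j. if i = j then (if i = i0 then -1 else 1) else 0)))"

definition lorentz_metric_on :: "(real^'n::finite) set \<Rightarrow> (real^'n \<Rightarrow> real^'n^'n) \<Rightarrow> bool" where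
  "lorentz_metric_on U g = ((\<forall>x\<in>U. lorentzian (g x)) \<and>
     (\<forall>i j. smooth_on U (\<lambda>x. g x $ i $ j)))"

definition ginv :: "(real^'n::finite \<Rightarrow> real^'n^'n) \<Rightarrow> real^'n \<Rightarrow> 'n \<Rightarrow> 'n \<Rightarrow> real" where
  "ginv g x k l = matrix_inv (g x) $ k $ l"

definition christoffel :: "(real^'n::finite \<Rightarrow> real^'n^'n) \<Rightarrow> real^'n \<Rightarrow> 'n \<Rightarrow> 'n \<Rightarrow> 'n \<Rightarrow> real" where
  "christoffel g x k i j = (1/2) * (\<Sum>l\<in>UNIV. ginv g x k l *
      (partial i (\<lambda>y. g y $ j $ l) x + partial j (\<lambda>y. g y $ i $ l) x
       - partial l (\<lambda>y. g y $ i $ j) x))"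

text \<open>Lowering an index: u_i = g_{ij} u^j (vector fields given by contravariant components).\<close>
definition lower :: "(real^'n::finite \<Rightarrow> real^'n^'n) \<Rightarrow> (real^'n \<Rightarrow> real^'n) \<Rightarrow> real^'n \<Rightarrow> 'n \<Rightarrow> real" where
  "lower g u x i = (\<Sum>j\<in>UNIV. g x $ i $ j * u x $ j)"

definition cov_deriv :: "(real^'n::finite \<Rightarrow> real^'n^'n) \<Rightarrow> (real^'n \<Rightarrow> real^'n) \<Rightarrow> real^'n \<Rightarrow> 'n \<Rightarrow> 'n \<Rightarrow> real" where
  "cov_deriv g u x i j = partial i (\<lambda>y. lower g u y j) x
      - (\<Sum>k\<in>UNIV. christoffel g x k i j * lower g u x k)"

definition gprod :: "(real^'n::finite \<Rightarrow> real^'n^'n) \<Rightarrow> (real^'n \<Rightarrow> real^'n) \<Rightarrow> (real^'n \<Rightarrow> real^'n) \<Rightarrow> real^'n \<Rightarrow> real" where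
  "gprod g u w x = (\<Sum>k\<in>UNIV. u x $ k * lower g w x k)"

definition smooth_vf_on :: "(real^'n::finite) set \<Rightarrow> (real^'n \<Rightarrow> real^'n) \<Rightarrow> bool" where
  "smooth_vf_on U u = (\<forall>k. smooth_on U (\<lambda>x. u x $ k))"

end

theory Submission
  imports Defs
begin

text \<open>Write \<open>c = u\<^sup>k w\<^sub>k\<close>. For torse-forming \<open>u, w\<close> one has
  \<open>\<nabla>\<^sub>i c = (\<phi> c + \<lambda>) u\<^sub>i + (\<phi> + \<lambda> c) w\<^sub>i\<close>, and since the 1-forms \<open>u\<^sub>i, w\<^sub>i\<close> are closed, the symmetry
  of \<open>\<nabla>\<^sub>i \<nabla>\<^sub>j c\<close> gives a tensor identity that is linear in \<open>\<nabla>\<lambda>\<close> and \<open>\<nabla>\<phi>\<close>. A second, scalar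
  identity comes from computing \<open>div [u, w]\<close> in two ways: from
  \<open>[u, w] = (\<lambda> c - \<phi>) w + (\<lambda> - \<phi> c) u\<close> and \<open>div u = (n - 1) \<phi>\<close>, \<open>div w = (n - 1) \<lambda>\<close>, and from
  the identity \<open>div [u, w] = u(div w) - w(div u)\<close>. If \<open>\<nabla>\<phi>\<close> is a multiple of \<open>u\<^sub>i\<close>, contracting
  the tensor identity with \<open>w\<close> and \<open>u\<close> and using the scalar one (where \<open>c\<^sup>2 \<noteq> 1\<close> and \<open>n \<noteq> 2\<close>
  enter) forces \<open>\<nabla>\<lambda>\<close> to be a multiple of \<open>w\<^sub>i\<close>.\<close>

section \<open>Partial derivatives and smooth functions\<close>

lemma partial_has_derivative: "(f has_derivative f') (at x) \<Longrightarrow> partial i f x = f' (axis i 1)"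
  unfolding partial_def using frechet_derivative_at by fastforce

lemma partial_cong:
  assumes "open U" "x \<in> U" "\<And>y. y \<in> U \<Longrightarrow> f y = h y"
  shows "partial i f x = partial i h x"
proof -
  have "(\<lambda>f'. (f has_derivative f') (at x)) = (\<lambda>f'. (h has_derivative f') (at x))"
    using has_derivative_transform_within_open[OF _ assms(1,2), of f _ UNIV h]
          has_derivative_transform_within_open[OF _ assms(1,2), of h _ UNIV f] assms(3)
    by (intro ext iffI) auto
  then show ?thesis unfolding partial_def frechet_derivative_def by (simp only:)
qed

lemma differentiable_transform_open:
  assumes "open U" "x \<in> U" "\<And>y. y \<in> U \<Longrightarrow> f y = h y" "f differentiable (at x)"
  shows "h differentiable (at x)"
  using assms has_derivative_transform_within_open[OF _ assms(1,2), of f _ UNIV h]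
  unfolding differentiable_def by auto

lemma partial_add:
  assumes "f differentiable (at x)" "h differentiable (at x)"
  shows "partial i (\<lambda>y. f y + h y) x = partial i f x + partial i h x"
  using partial_has_derivative[OF has_derivative_add[OF assms[unfolded frechet_derivative_works]]]
  by (simp add: partial_def)

lemma partial_diff:
  assumes "f differentiable (at x)" "h differentiable (at x)"
  shows "partial i (\<lambda>y. f y - h y) x = partial i f x - partial i h x"
  using partial_has_derivative[OF has_derivative_diff[OF assms[unfolded frechet_derivative_works]]]
  by (simp add: partial_def)

lemma partial_mult:
  assumes "f differentiable (at x)" "h differentiable (at x)"
  shows "partial i (\<lambda>y. f y * h y) x = partial i f x * h x + f x * partial i h x"
  using partial_has_derivative[OF has_derivative_mult[OF assms[unfolded frechet_derivative_works]]]
  by (simp add: partial_def)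

lemma partial_const: "partial i (\<lambda>y. c) x = 0"
  using partial_has_derivative[OF has_derivative_const] by metis

lemma partial_cmult:
  "f differentiable (at x) \<Longrightarrow> partial i (\<lambda>y. c * f y) x = c * partial i f x"
  using partial_mult[of "\<lambda>y. c" x f i] by (simp add: partial_const)

lemma partial_sum:
  "finite S \<Longrightarrow> (\<And>k. k \<in> S \<Longrightarrow> f k differentiable (at x)) \<Longrightarrow>
    partial i (\<lambda>y. \<Sum>k\<in>S. f k y) x = (\<Sum>k\<in>S. partial i (f k) x)"
proof (induction S rule: finite_induct)
  case empty
  then show ?case by (simp add: partial_const)
next
  case (insert a S)
  then have "partial i (\<lambda>y. f a y + (\<Sum>k\<in>S. f k y)) x
      = partial i (f a) x + partial i (\<lambda>y. \<Sum>k\<in>S. f k y) x"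
    by (intro partial_add) (auto intro!: differentiable_sum)
  with insert show ?case by simp
qed

lemma Ck_cong: "open U \<Longrightarrow> Ck k U f \<Longrightarrow> (\<And>y. y \<in> U \<Longrightarrow> f y = h y) \<Longrightarrow> Ck k U h"
proof (induction k arbitrary: f h)
  case 0 then show ?case using continuous_on_cong by fastforce
next
  case (Suc k)
  have d: "h differentiable_on U"
  proof -
    have "f differentiable_on U" using Suc.prems(2) by simp
    then have "\<forall>y\<in>U. f differentiable at y"
      using differentiable_on_eq_differentiable_at[OF Suc.prems(1)] by blast
    then have "\<forall>y\<in>U. h differentiable at y"
      using differentiable_transform_open[OF Suc.prems(1), of _ f h] Suc.prems(3) by blast
    then show ?thesis using differentiable_on_eq_differentiable_at[OF Suc.prems(1)] by blast
  qed
  have "Ck k U (partial i h)" for i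
  proof (rule Suc.IH[OF Suc.prems(1)])
    show "Ck k U (partial i f)" using Suc.prems(2) by simp
    show "partial i f y = partial i h y" if "y \<in> U" for y
      using partial_cong[OF Suc.prems(1) that Suc.prems(3)] .
  qed
  then show ?case using d by simp
qed

lemma Ck_SucD: "Ck (Suc k) U f \<Longrightarrow> Ck k U f"
proof (induction k arbitrary: f)
  case 0
  then show ?case by (simp add: differentiable_imp_continuous_on)
next
  case (Suc k)
  then show ?case using Suc.IH by simp
qed

lemma Ck_differentiable_at: "open U \<Longrightarrow> Ck (Suc k) U f \<Longrightarrow> x \<in> U \<Longrightarrow> f differentiable (at x)"
  using differentiable_on_eq_differentiable_at by auto

lemma Ck_const: "Ck k U (\<lambda>y. c)"
proof (induction k arbitrary: c)
  case (Suc k)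
  have e: "partial i (\<lambda>y. c) = (\<lambda>y. 0)" for i
    by (rule ext) (simp add: partial_const)
  have "Ck k U (partial i (\<lambda>y. c))" for i
    unfolding e by (rule Suc.IH)
  then show ?case by simp
qed simp

lemma Ck_add: "open U \<Longrightarrow> Ck k U f \<Longrightarrow> Ck k U h \<Longrightarrow> Ck k U (\<lambda>y. f y + h y)"
proof (induction k arbitrary: f h)
  case 0 then show ?case by (auto intro: continuous_on_add)
next
  case (Suc k)
  have "Ck k U (partial i (\<lambda>y. f y + h y))" for i
  proof -
    have "Ck k U (\<lambda>y. partial i f y + partial i h y)" using Suc by auto
    then show ?thesis
      by (rule Ck_cong[OF Suc.prems(1)])
        (rule partial_add[symmetric, OF Ck_differentiable_at[OF Suc.prems(1,2)]
            Ck_differentiable_at[OF Suc.prems(1,3)]])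
  qed
  then show ?case using Suc.prems by (auto intro: differentiable_on_add)
qed

lemma Ck_mult: "open U \<Longrightarrow> Ck k U f \<Longrightarrow> Ck k U h \<Longrightarrow> Ck k U (\<lambda>y. f y * h y)"
proof (induction k arbitrary: f h)
  case 0 then show ?case by (auto intro: continuous_on_mult)
next
  case (Suc k)
  have "Ck k U (partial i (\<lambda>y. f y * h y))" for i
  proof -
    have "Ck k U (\<lambda>y. partial i f y * h y + f y * partial i h y)"
      using Suc.prems Suc.IH by (intro Ck_add Suc.IH) (auto intro: Ck_SucD)
    then show ?thesis
      by (rule Ck_cong[OF Suc.prems(1)])
        (rule partial_mult[symmetric, OF Ck_differentiable_at[OF Suc.prems(1,2)]
            Ck_differentiable_at[OF Suc.prems(1,3)]])
  qed
  then show ?case using Suc.prems by (auto intro: differentiable_on_mult)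
qed

lemma Ck_sum: "open U \<Longrightarrow> (\<And>j. j \<in> S \<Longrightarrow> Ck k U (f j)) \<Longrightarrow> Ck k U (\<lambda>y. \<Sum>j\<in>S. f j y)"
  by (induction S rule: infinite_finite_induct) (simp_all add: Ck_const Ck_add)

lemma Ck_prod: "open U \<Longrightarrow> (\<And>j. j \<in> S \<Longrightarrow> Ck k U (f j)) \<Longrightarrow> Ck k U (\<lambda>y. \<Prod>j\<in>S. f j y)"
  by (induction S rule: infinite_finite_induct) (simp_all add: Ck_const Ck_mult)

lemma smooth_on_const: "smooth_on U (\<lambda>y. c)"
  unfolding smooth_on_def by (auto intro: Ck_const)

lemma smooth_on_mult:
  "open U \<Longrightarrow> smooth_on U f \<Longrightarrow> smooth_on U h \<Longrightarrow> smooth_on U (\<lambda>y. f y * h y)"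
  unfolding smooth_on_def by (auto intro: Ck_mult)

lemma smooth_on_sum:
  "open U \<Longrightarrow> (\<And>j. j \<in> S \<Longrightarrow> smooth_on U (f j)) \<Longrightarrow> smooth_on U (\<lambda>y. \<Sum>j\<in>S. f j y)"
  unfolding smooth_on_def by (auto intro: Ck_sum)

lemma smooth_on_prod:
  "open U \<Longrightarrow> (\<And>j. j \<in> S \<Longrightarrow> smooth_on U (f j)) \<Longrightarrow> smooth_on U (\<lambda>y. \<Prod>j\<in>S. f j y)"
  unfolding smooth_on_def by (auto intro: Ck_prod)

lemma smooth_on_partial: "smooth_on U f \<Longrightarrow> smooth_on U (partial i f)"
  unfolding smooth_on_def by (metis Ck.simps(2))

lemma smooth_on_differentiable_at:
  "open U \<Longrightarrow> smooth_on U f \<Longrightarrow> x \<in> U \<Longrightarrow> f differentiable (at x)"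
  unfolding smooth_on_def using Ck_differentiable_at by blast

lemma smooth_on_imp_C2: "smooth_on U f \<Longrightarrow> Ck 2 U f"
  unfolding smooth_on_def by blast

lemma smooth_on_det:
  "open U \<Longrightarrow> (\<And>i j. smooth_on U (\<lambda>y. M y $ i $ j)) \<Longrightarrow> smooth_on U (\<lambda>y. det (M y :: real^'n^'n))"
  unfolding det_def
  by (intro smooth_on_sum smooth_on_mult smooth_on_const smooth_on_prod) auto

lemma smooth_vf_on_differentiable: "open U \<Longrightarrow> smooth_vf_on U u \<Longrightarrow> y \<in> U
    \<Longrightarrow> (\<lambda>z. u z $ b) differentiable (at y)"
  unfolding smooth_vf_on_def using smooth_on_differentiable_at by blast

lemma smooth_vf_on_component: "smooth_vf_on U u \<Longrightarrow> smooth_on U (\<lambda>z. u z $ b)"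
  unfolding smooth_vf_on_def by blast

section \<open>Symmetry of second partial derivatives\<close>

lemma partial_along_axis:
  assumes "f differentiable (at (p + s *\<^sub>R axis i 1))"
  shows "((\<lambda>t. f (p + t *\<^sub>R axis i 1)) has_real_derivative partial i f (p + s *\<^sub>R axis i 1)) (at s)"
proof -
  let ?F = "frechet_derivative f (at (p + s *\<^sub>R axis i 1))"
  have F: "(f has_derivative ?F) (at (p + s *\<^sub>R axis i 1))"
    using assms frechet_derivative_works by blast
  have "((\<lambda>t. p + t *\<^sub>R axis i 1) has_derivative (\<lambda>t. t *\<^sub>R axis i 1)) (at s)"
    by (auto intro!: derivative_eq_intros)
  from has_derivative_compose[OF this F]
  have "((\<lambda>t. f (p + t *\<^sub>R axis i 1)) has_derivative (\<lambda>t. ?F (t *\<^sub>R axis i 1))) (at s)"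
    by simp
  moreover have "(\<lambda>t. ?F (t *\<^sub>R axis i 1)) = (\<lambda>t. partial i f (p + s *\<^sub>R axis i 1) * t)"
    using has_derivative_linear[OF F] unfolding partial_def by (auto simp: linear_scale)
  ultimately show ?thesis unfolding has_field_derivative_def by simp
qed

lemma second_difference_mvt:
  fixes f :: "real^'n::finite \<Rightarrow> real"
  assumes U: "open U" and df: "f differentiable_on U" and dF: "(partial i f) differentiable_on U"
    and h: "h > 0"
    and sq: "\<And>\<sigma> \<tau>. 0 \<le> \<sigma> \<Longrightarrow> \<sigma> \<le> h \<Longrightarrow> 0 \<le> \<tau> \<Longrightarrow> \<tau> \<le> h \<Longrightarrow>
               x + \<sigma> *\<^sub>R axis i 1 + \<tau> *\<^sub>R axis j 1 \<in> U"
  obtains \<sigma> \<tau> where "0 < \<sigma>" "\<sigma> < h" "0 < \<tau>" "\<tau> < h"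
    "f (x + h *\<^sub>R axis i 1 + h *\<^sub>R axis j 1) - f (x + h *\<^sub>R axis i 1) - f (x + h *\<^sub>R axis j 1) + f x
     = h * h * partial j (partial i f) (x + \<sigma> *\<^sub>R axis i 1 + \<tau> *\<^sub>R axis j 1)"
proof -
  define ei :: "real^'n" where "ei = axis i 1"
  define ej :: "real^'n" where "ej = axis j 1"
  have dfa: "f differentiable (at y)" and dFa: "partial i f differentiable (at y)" if "y \<in> U" for y
    using df dF U that differentiable_on_eq_differentiable_at by blast+
  define \<phi> where "\<phi> \<sigma> = f (x + h *\<^sub>R ej + \<sigma> *\<^sub>R ei) - f (x + \<sigma> *\<^sub>R ei)" for \<sigma>
  have d\<phi>: "(\<phi> has_real_derivative
      (partial i f (x + h *\<^sub>R ej + \<sigma> *\<^sub>R ei) - partial i f (x + \<sigma> *\<^sub>R ei))) (at \<sigma>)"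
    if "0 \<le> \<sigma>" "\<sigma> \<le> h" for \<sigma>
  proof -
    have "x + h *\<^sub>R ej + \<sigma> *\<^sub>R ei \<in> U" "x + \<sigma> *\<^sub>R ei \<in> U"
      using sq[of \<sigma> h] sq[of \<sigma> 0] that h unfolding ei_def ej_def by (simp_all add: algebra_simps)
    then show ?thesis unfolding \<phi>_def[abs_def] ei_def
      using DERIV_diff[OF partial_along_axis[OF dfa] partial_along_axis[OF dfa]] by simp
  qed
  obtain \<sigma> where s: "0 < \<sigma>" "\<sigma> < h"
    and s1: "\<phi> h - \<phi> 0
      = (h - 0) * (partial i f (x + h *\<^sub>R ej + \<sigma> *\<^sub>R ei) - partial i f (x + \<sigma> *\<^sub>R ei))"
    using MVT2[OF h d\<phi>] by blast
  define \<psi> where "\<psi> \<tau> = partial i f (x + \<sigma> *\<^sub>R ei + \<tau> *\<^sub>R ej)" for \<tau>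
  have d\<psi>: "(\<psi> has_real_derivative partial j (partial i f) (x + \<sigma> *\<^sub>R ei + \<tau> *\<^sub>R ej)) (at \<tau>)"
    if "0 \<le> \<tau>" "\<tau> \<le> h" for \<tau>
  proof -
    have "x + \<sigma> *\<^sub>R ei + \<tau> *\<^sub>R ej \<in> U" using sq[of \<sigma> \<tau>] that s unfolding ei_def ej_def by simp
    then show ?thesis unfolding \<psi>_def[abs_def] ej_def
      using partial_along_axis[OF dFa] by simp
  qed
  obtain \<tau> where t: "0 < \<tau>" "\<tau> < h"
    and t1: "\<psi> h - \<psi> 0 = (h - 0) * partial j (partial i f) (x + \<sigma> *\<^sub>R ei + \<tau> *\<^sub>R ej)"
    using MVT2[OF h d\<psi>] by blast
  have "f (x + h *\<^sub>R ei + h *\<^sub>R ej) - f (x + h *\<^sub>R ei) - f (x + h *\<^sub>R ej) + f x = \<phi> h - \<phi> 0"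
    unfolding \<phi>_def by (simp add: algebra_simps)
  also have "\<dots> = h * (\<psi> h - \<psi> 0)" using s1 unfolding \<psi>_def by (simp add: algebra_simps)
  also have "\<dots> = h * h * partial j (partial i f) (x + \<sigma> *\<^sub>R ei + \<tau> *\<^sub>R ej)" using t1 by simp
  finally show ?thesis using s t that unfolding ei_def ej_def by blast
qed

lemma dist_add_axes_less:
  fixes x :: "real^'n::finite"
  assumes "0 \<le> \<sigma>" "\<sigma> \<le> h" "0 \<le> \<tau>" "\<tau> \<le> h" "3 * h = d" "d > 0"
  shows "dist (x + \<sigma> *\<^sub>R axis i 1 + \<tau> *\<^sub>R axis j 1) x < d"
proof -
  have "dist (x + \<sigma> *\<^sub>R axis i 1 + \<tau> *\<^sub>R axis j 1) x
      = norm (\<sigma> *\<^sub>R (axis i 1::real^'n) + \<tau> *\<^sub>R (axis j 1::real^'n))"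
    by (simp add: dist_norm)
  also have "\<dots> \<le> norm (\<sigma> *\<^sub>R (axis i 1::real^'n)) + norm (\<tau> *\<^sub>R (axis j 1::real^'n))"
    by (rule norm_triangle_ineq)
  also have "\<dots> = \<sigma> + \<tau>" using assms by simp
  finally show ?thesis using assms by linarith
qed

text \<open>Schwarz's theorem: both mixed partials are limits of the same second difference.\<close>
lemma partial_commute:
  fixes f :: "real^'n::finite \<Rightarrow> real"
  assumes U: "open U" and x: "x \<in> U" and df: "f differentiable_on U"
    and dFi: "(partial i f) differentiable_on U" and dFj: "(partial j f) differentiable_on U"
    and c1: "continuous_on U (partial j (partial i f))"
    and c2: "continuous_on U (partial i (partial j f))"
  shows "partial j (partial i f) x = partial i (partial j f) x"
proof (rule ccontr)
  let ?a = "partial j (partial i f) x" and ?b = "partial i (partial j f) x"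
  assume ne: "?a \<noteq> ?b"
  define e where "e = \<bar>?a - ?b\<bar> / 2"
  have e: "e > 0" using ne unfolding e_def by simp
  have "continuous (at x) (partial j (partial i f))" "continuous (at x) (partial i (partial j f))"
    using c1 c2 U x continuous_on_eq_continuous_at by blast+
  then obtain d1 d2
    where d1: "d1 > 0" "\<And>y. dist y x < d1 \<Longrightarrow> dist (partial j (partial i f) y) ?a < e"
      and d2: "d2 > 0" "\<And>y. dist y x < d2 \<Longrightarrow> dist (partial i (partial j f) y) ?b < e"
    using e unfolding continuous_at_eps_delta by blast
  obtain d3 where d3: "d3 > 0" "ball x d3 \<subseteq> U" using U x openE by blast
  define d where "d = min d1 (min d2 d3)"
  have d: "d > 0" using d1 d2 d3 unfolding d_def by simp
  define h where "h = d / 3"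
  have h: "h > 0" "3 * h = d" using d unfolding h_def by auto
  have inU: "y \<in> U" if "dist y x < d" for y using that d3 unfolding d_def
    by (auto simp: dist_commute)
  obtain \<sigma> \<tau> where st: "0 < \<sigma>" "\<sigma> < h" "0 < \<tau>" "\<tau> < h"
    and e1: "f (x + h *\<^sub>R axis i 1 + h *\<^sub>R axis j 1) - f (x + h *\<^sub>R axis i 1)
        - f (x + h *\<^sub>R axis j 1) + f x
     = h * h * partial j (partial i f) (x + \<sigma> *\<^sub>R axis i 1 + \<tau> *\<^sub>R axis j 1)"
    using second_difference_mvt[OF U df dFi h(1), of x j] inU dist_add_axes_less[OF _ _ _ _ h(2) d]
    by blast
  obtain \<sigma>' \<tau>' where st': "0 < \<sigma>'" "\<sigma>' < h" "0 < \<tau>'" "\<tau>' < h"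
    and e2: "f (x + h *\<^sub>R axis j 1 + h *\<^sub>R axis i 1) - f (x + h *\<^sub>R axis j 1)
        - f (x + h *\<^sub>R axis i 1) + f x
     = h * h * partial i (partial j f) (x + \<sigma>' *\<^sub>R axis j 1 + \<tau>' *\<^sub>R axis i 1)"
    using second_difference_mvt[OF U df dFj h(1), of x i] inU dist_add_axes_less[OF _ _ _ _ h(2) d]
    by blast
  have eq: "partial j (partial i f) (x + \<sigma> *\<^sub>R axis i 1 + \<tau> *\<^sub>R axis j 1)
      = partial i (partial j f) (x + \<sigma>' *\<^sub>R axis j 1 + \<tau>' *\<^sub>R axis i 1)"
    using e1 e2 h by (simp add: algebra_simps)
  have "dist (partial j (partial i f) (x + \<sigma> *\<^sub>R axis i 1 + \<tau> *\<^sub>R axis j 1)) ?a < e"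
    using d1(2) dist_add_axes_less[OF _ _ _ _ h(2) d, of \<sigma> \<tau> x i j] st unfolding d_def by auto
  moreover have "dist (partial i (partial j f) (x + \<sigma>' *\<^sub>R axis j 1 + \<tau>' *\<^sub>R axis i 1)) ?b < e"
    using d2(2) dist_add_axes_less[OF _ _ _ _ h(2) d, of \<sigma>' \<tau>' x j i] st' unfolding d_def by auto
  ultimately show False using eq unfolding e_def dist_real_def
    by (simp add: abs_if split: if_split_asm)
qed

lemma partial_commute_C2:
  assumes "open U" "x \<in> U" "Ck 2 U f"
  shows "partial j (partial i f) x = partial i (partial j f) x"
  using assms by (intro partial_commute[OF assms(1,2)]) (auto simp: numeral_2_eq_2)

section \<open>The metric in a chart\<close>

lemma lorentzian_det_nonzero:
  assumes "lorentzian (G::real^'n::finite^'n)" shows "det G \<noteq> 0"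
proof -
  obtain P :: "real^'n^'n" and i0
    where P: "transpose P ** G ** P = (\<chi> i j. if i = j then (if i = i0 then -1 else 1) else 0)"
    using assms unfolding lorentzian_def by blast
  have "det (\<chi> i j. if i = j then (if i = i0 then -1 else 1) else (0::real))
      = (\<Prod>i\<in>UNIV. if i = i0 then -1 else 1)"
    by (subst det_diagonal) auto
  also have "\<dots> \<noteq> 0" by (auto simp: prod_zero_iff)
  finally have "det (transpose P ** G ** P) \<noteq> 0" using P by simp
  then show ?thesis by (simp add: det_mul)
qed

lemma sum_mult_sum_swap:
  "(\<Sum>l\<in>UNIV. (a l::real) * (\<Sum>m\<in>UNIV. b l m * t m)) = (\<Sum>m\<in>UNIV. (\<Sum>l\<in>UNIV. a l * b l m) * t m)"
  unfolding sum_distrib_left sum_distrib_right mult.assoc by (rule sum.swap)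

lemma sum_delta_mult: "(\<Sum>m\<in>UNIV. (if (a::'a::finite) = m then 1 else 0) * (t m::real)) = t a"
proof -
  have "(\<lambda>m. (if a = m then 1 else 0) * t m) = (\<lambda>m. if a = m then t m else 0)" by auto
  then show ?thesis by (simp only:) simp
qed

lemma sum_swap_inner_outer: "(\<Sum>k\<in>UNIV. \<Sum>m\<in>UNIV. \<Sum>a\<in>UNIV. \<Sum>b\<in>UNIV. (F k m a b::real))
    = (\<Sum>a\<in>UNIV. \<Sum>b\<in>UNIV. \<Sum>k\<in>UNIV. \<Sum>m\<in>UNIV. F k m a b)"
proof -
  have "(\<Sum>k\<in>UNIV. \<Sum>m\<in>UNIV. \<Sum>a\<in>UNIV. \<Sum>b\<in>UNIV. F k m a b)
      = (\<Sum>k\<in>UNIV. \<Sum>a\<in>UNIV. \<Sum>m\<in>UNIV. \<Sum>b\<in>UNIV. F k m a b)"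
    by (rule sum.cong[OF refl], rule sum.swap)
  also have "\<dots> = (\<Sum>k\<in>UNIV. \<Sum>a\<in>UNIV. \<Sum>b\<in>UNIV. \<Sum>m\<in>UNIV. F k m a b)"
    by (rule sum.cong[OF refl], rule sum.cong[OF refl], rule sum.swap)
  also have "\<dots> = (\<Sum>a\<in>UNIV. \<Sum>k\<in>UNIV. \<Sum>b\<in>UNIV. \<Sum>m\<in>UNIV. F k m a b)"
    by (rule sum.swap)
  also have "\<dots> = (\<Sum>a\<in>UNIV. \<Sum>b\<in>UNIV. \<Sum>k\<in>UNIV. \<Sum>m\<in>UNIV. F k m a b)"
    by (rule sum.cong[OF refl], rule sum.swap)
  finally show ?thesis .
qed

lemma sum_sandwich_swap:
  fixes H A B :: "'n::finite \<Rightarrow> 'n \<Rightarrow> real"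
  assumes H: "\<And>i j. H i j = H j i"
  shows "(\<Sum>k\<in>UNIV. \<Sum>m\<in>UNIV. (\<Sum>a\<in>UNIV. \<Sum>b\<in>UNIV. H k a * A a b * H b m) * B k m)
       = (\<Sum>k\<in>UNIV. \<Sum>m\<in>UNIV. (\<Sum>a\<in>UNIV. \<Sum>b\<in>UNIV. H k a * B a b * H b m) * A k m)"
proof -
  have "(\<Sum>k\<in>UNIV. \<Sum>m\<in>UNIV. (\<Sum>a\<in>UNIV. \<Sum>b\<in>UNIV. H k a * A a b * H b m) * B k m)
      = (\<Sum>k\<in>UNIV. \<Sum>m\<in>UNIV. \<Sum>a\<in>UNIV. \<Sum>b\<in>UNIV. H k a * A a b * H b m * B k m)"
    by (simp add: sum_distrib_right)
  also have "\<dots> = (\<Sum>a\<in>UNIV. \<Sum>b\<in>UNIV. \<Sum>k\<in>UNIV. \<Sum>m\<in>UNIV. H k a * A a b * H b m * B k m)"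
    by (rule sum_swap_inner_outer)
  also have "\<dots> = (\<Sum>a\<in>UNIV. \<Sum>b\<in>UNIV. \<Sum>k\<in>UNIV. \<Sum>m\<in>UNIV. H a k * B k m * H m b * A a b)"
  proof (intro sum.cong refl)
    fix a b k m
    have "H a k = H k a" "H m b = H b m" by (rule H)+
    then show "H k a * A a b * H b m * B k m = H a k * B k m * H m b * A a b"
      by (simp add: ac_simps)
  qed
  also have "\<dots> = (\<Sum>k\<in>UNIV. \<Sum>m\<in>UNIV. (\<Sum>a\<in>UNIV. \<Sum>b\<in>UNIV. H k a * B a b * H b m) * A k m)"
    by (simp add: sum_distrib_right)
  finally show ?thesis .
qed

definition christoffel_trace :: "(real^'n::finite \<Rightarrow> real^'n^'n) \<Rightarrow> real^'n \<Rightarrow> 'n \<Rightarrow> real" where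
  "christoffel_trace g y l = (\<Sum>k\<in>UNIV. christoffel g y k k l)"

locale lorentz_chart =
  fixes U :: "(real^'n::finite) set" and g :: "real^'n \<Rightarrow> real^'n^'n"
  assumes open_U: "open U" and metric: "lorentz_metric_on U g"
begin

lemma metric_smooth: "smooth_on U (\<lambda>y. g y $ i $ j)"
  using metric unfolding lorentz_metric_on_def by blast

lemma metric_differentiable: "y \<in> U \<Longrightarrow> (\<lambda>y. g y $ i $ j) differentiable (at y)"
  using smooth_on_differentiable_at[OF open_U metric_smooth] by blast

lemma metric_sym: "y \<in> U \<Longrightarrow> g y $ i $ j = g y $ j $ i"
proof -
  assume "y \<in> U"
  then have "transpose (g y) = g y" using metric unfolding lorentz_metric_on_def lorentzian_def
    by blast
  then have "transpose (g y) $ i $ j = g y $ i $ j" by simp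
  then show ?thesis by (simp add: transpose_def)
qed

lemma det_metric_nonzero: "y \<in> U \<Longrightarrow> det (g y) \<noteq> 0"
  using metric lorentzian_det_nonzero unfolding lorentz_metric_on_def by blast

lemma metric_inverse: "y \<in> U \<Longrightarrow> g y ** matrix_inv (g y) = mat 1 \<and> matrix_inv (g y) ** g y = mat 1"
proof -
  assume "y \<in> U"
  then have "invertible (g y)" using det_metric_nonzero invertible_det_nz by blast
  then show ?thesis unfolding invertible_def matrix_inv_def by (rule someI_ex)
qed

lemma metric_ginv: "y \<in> U \<Longrightarrow> (\<Sum>k\<in>UNIV. g y $ i $ k * ginv g y k j) = (if i = j then 1 else 0)"
proof -
  assume y: "y \<in> U"
  have "(g y ** matrix_inv (g y)) $ i $ j = mat 1 $ i $ j" using metric_inverse[OF y] by simp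
  then show ?thesis unfolding ginv_def matrix_matrix_mult_def mat_def by simp
qed

lemma ginv_metric: "y \<in> U \<Longrightarrow> (\<Sum>k\<in>UNIV. ginv g y i k * g y $ k $ j) = (if i = j then 1 else 0)"
proof -
  assume y: "y \<in> U"
  have "(matrix_inv (g y) ** g y) $ i $ j = mat 1 $ i $ j" using metric_inverse[OF y] by simp
  then show ?thesis unfolding ginv_def matrix_matrix_mult_def mat_def by simp
qed

lemma ginv_metric_transposed: "y \<in> U \<Longrightarrow> (\<Sum>m\<in>UNIV. ginv g y k m * g y $ j $ m)
    = (if k = j then 1 else 0)"
  using ginv_metric[of y k j] metric_sym[of y] by simp

lemma ginv_sym: "y \<in> U \<Longrightarrow> ginv g y i j = ginv g y j i"
proof -
  assume y: "y \<in> U"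
  let ?H = "matrix_inv (g y)"
  have gt: "transpose (g y) = g y" using y metric unfolding lorentz_metric_on_def lorentzian_def
    by blast
  have "transpose ?H = transpose ?H ** (g y ** ?H)" using metric_inverse[OF y] by simp
  also have "\<dots> = (transpose ?H ** transpose (g y)) ** ?H" using gt by (simp add: matrix_mul_assoc)
  also have "\<dots> = transpose (g y ** ?H) ** ?H" by (simp add: matrix_transpose_mul)
  also have "\<dots> = ?H" using metric_inverse[OF y] by simp
  finally have "transpose ?H = ?H" .
  then have "transpose ?H $ i $ j = ?H $ i $ j" by simp
  then show ?thesis unfolding ginv_def by (simp add: transpose_def)
qed

lemma partial_metric_sym: "y \<in> U \<Longrightarrow> partial k (\<lambda>z. g z $ i $ j) y = partial k (\<lambda>z. g z $ j $ i) y"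
  by (rule partial_cong[OF open_U]) (auto intro: metric_sym)

lemma ginv_cramer: "y \<in> U \<Longrightarrow> ginv g y k m =
   det (\<chi> i j. if j = k then axis m 1 $ i else g y $ i $ j) / det (g y)"
proof -
  assume y: "y \<in> U"
  let ?H = "matrix_inv (g y)"
  have "g y *v (?H *v axis m 1) = axis m 1"
    using metric_inverse[OF y] by (simp add: matrix_vector_mul_assoc)
  then have "?H *v axis m 1 = (\<chi> k. det(\<chi> i j. if j=k then axis m 1 $ i else g y $ i $ j) / det (g y))"
    using cramer[OF det_metric_nonzero[OF y]] by blast
  then have "(?H *v axis m 1) $ k = det(\<chi> i j. if j=k then axis m 1 $ i else g y $ i $ j) / det (g y)"
    by simp
  moreover have "(?H *v axis m 1) $ k = ?H $ k $ m"
  proof -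
    have "\<And>j. ?H $ k $ j * (if j = m then 1 else 0) = (if j = m then ?H $ k $ j else 0)" by simp
    then show ?thesis by (simp add: matrix_vector_mult_def axis_def)
  qed
  ultimately show ?thesis unfolding ginv_def by simp
qed

lemma ginv_differentiable: "y \<in> U \<Longrightarrow> (\<lambda>z. ginv g z k m) differentiable (at y)"
proof -
  assume y: "y \<in> U"
  have "smooth_on U (\<lambda>z. if j = k then axis m 1 $ i else g z $ i $ j)" for i j
    by (cases "j = k") (simp_all add: smooth_on_const metric_smooth)
  then have n: "smooth_on U (\<lambda>z. det (\<chi> i j. if j = k then axis m 1 $ i else g z $ i $ j))"
    by (intro smooth_on_det[OF open_U]) simp
  have d: "smooth_on U (\<lambda>z. det (g z))" by (rule smooth_on_det[OF open_U]) (rule metric_smooth)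
  have "(\<lambda>z. det (\<chi> i j. if j = k then axis m 1 $ i else g z $ i $ j) / det (g z))
      differentiable (at y)"
    using smooth_on_differentiable_at[OF open_U n y] smooth_on_differentiable_at[OF open_U d y]
        det_metric_nonzero[OF y] by (rule differentiable_divide)
  then show ?thesis using differentiable_transform_open[OF open_U y] ginv_cramer
    by (metis (no_types, lifting))
qed

lemma partial_ginv:
  assumes y: "y \<in> U"
  shows "partial j (\<lambda>z. ginv g z k m) y = - (\<Sum>a\<in>UNIV. \<Sum>b\<in>UNIV.
     ginv g y k a * partial j (\<lambda>z. g z $ a $ b) y * ginv g y b m)"
proof -
  let ?H = "ginv g y" and ?dH = "\<lambda>a b. partial j (\<lambda>z. ginv g z a b) y"
    and ?dg = "\<lambda>a b. partial j (\<lambda>z. g z $ a $ b) y"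
  have E: "(\<Sum>b\<in>UNIV. g y $ a $ b * ?dH b m) = - (\<Sum>b\<in>UNIV. ?dg a b * ?H b m)" for a
  proof -
    have "partial j (\<lambda>z. \<Sum>b\<in>UNIV. g z $ a $ b * ginv g z b m) y
        = partial j (\<lambda>z. if a = m then 1 else 0) y"
      by (rule partial_cong[OF open_U y]) (simp add: metric_ginv)
    also have "\<dots> = 0" by (rule partial_const)
    finally have "0 = partial j (\<lambda>z. \<Sum>b\<in>UNIV. g z $ a $ b * ginv g z b m) y" by simp
    also have "\<dots> = (\<Sum>b\<in>UNIV. partial j (\<lambda>z. g z $ a $ b * ginv g z b m) y)"
      using metric_differentiable[OF y] ginv_differentiable[OF y] by (intro partial_sum) auto
    also have "\<dots> = (\<Sum>b\<in>UNIV. ?dg a b * ?H b m + g y $ a $ b * ?dH b m)"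
      using metric_differentiable[OF y] ginv_differentiable[OF y]
      by (intro sum.cong refl partial_mult)
    finally show ?thesis by (simp add: sum.distrib eq_neg_iff_add_eq_0 add.commute)
  qed
  have "?dH k m = (\<Sum>b\<in>UNIV. (if k = b then 1 else 0) * ?dH b m)" by (rule sum_delta_mult[symmetric])
  also have "\<dots> = (\<Sum>b\<in>UNIV. (\<Sum>a\<in>UNIV. ?H k a * g y $ a $ b) * ?dH b m)"
    using ginv_metric[OF y] by simp
  also have "\<dots> = (\<Sum>a\<in>UNIV. ?H k a * (\<Sum>b\<in>UNIV. g y $ a $ b * ?dH b m))"
    by (rule sum_mult_sum_swap[symmetric])
  also have "\<dots> = (\<Sum>a\<in>UNIV. ?H k a * (- (\<Sum>b\<in>UNIV. ?dg a b * ?H b m)))"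
    using E by simp
  also have "\<dots> = - (\<Sum>a\<in>UNIV. \<Sum>b\<in>UNIV. ?H k a * ?dg a b * ?H b m)"
    by (simp add: sum_distrib_left sum_negf mult.assoc)
  finally show ?thesis .
qed

lemma christoffel_sym:
  assumes y: "y \<in> U"
  shows "christoffel g y k i j = christoffel g y k j i"
proof -
  have "\<And>l. partial l (\<lambda>z. g z $ i $ j) y = partial l (\<lambda>z. g z $ j $ i) y"
    using partial_metric_sym[OF y] by blast
  then show ?thesis unfolding christoffel_def by (simp add: algebra_simps)
qed

lemma metric_christoffel:
  assumes y: "y \<in> U"
  shows "(\<Sum>l\<in>UNIV. g y $ a $ l * christoffel g y l i j) = (1/2) *
     (partial i (\<lambda>z. g z $ j $ a) y
         + partial j (\<lambda>z. g z $ i $ a) y - partial a (\<lambda>z. g z $ i $ j) y)"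
proof -
  let ?T = "\<lambda>l. partial i (\<lambda>y. g y $ j $ l) y
      + partial j (\<lambda>y. g y $ i $ l) y - partial l (\<lambda>y. g y $ i $ j) y"
  have "(\<Sum>l\<in>UNIV. g y $ a $ l * christoffel g y l i j)
      = (1/2) * (\<Sum>l\<in>UNIV. g y $ a $ l * (\<Sum>m\<in>UNIV. ginv g y l m * ?T m))"
    unfolding christoffel_def by (simp add: sum_distrib_left algebra_simps)
  also have "\<dots> = (1/2) * (\<Sum>m\<in>UNIV. (\<Sum>l\<in>UNIV. g y $ a $ l * ginv g y l m) * ?T m)"
    by (simp only: sum_mult_sum_swap)
  also have "\<dots> = (1/2) * ?T a" using metric_ginv[OF y] by (simp add: sum_delta_mult)
  finally show ?thesis .
qed

lemma metric_cancel:
  assumes y: "y \<in> U"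
    and h: "\<And>a. (\<Sum>b\<in>UNIV. g y $ a $ b * v b) = (\<Sum>b\<in>UNIV. g y $ a $ b * w b)"
  shows "v k = (w k :: real)"
proof -
  have "v k = (\<Sum>b\<in>UNIV. (if k = b then 1 else 0) * v b)" by (rule sum_delta_mult[symmetric])
  also have "\<dots> = (\<Sum>b\<in>UNIV. (\<Sum>a\<in>UNIV. ginv g y k a * g y $ a $ b) * v b)" using ginv_metric[OF y]
    by simp
  also have "\<dots> = (\<Sum>a\<in>UNIV. ginv g y k a * (\<Sum>b\<in>UNIV. g y $ a $ b * v b))"
    by (rule sum_mult_sum_swap[symmetric])
  also have "\<dots> = (\<Sum>a\<in>UNIV. ginv g y k a * (\<Sum>b\<in>UNIV. g y $ a $ b * w b))" using h by simp
  also have "\<dots> = (\<Sum>b\<in>UNIV. (\<Sum>a\<in>UNIV. ginv g y k a * g y $ a $ b) * w b)" by (rule sum_mult_sum_swap)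
  also have "\<dots> = w k" using ginv_metric[OF y] by (simp add: sum_delta_mult)
  finally show ?thesis .
qed

lemma lower_smooth: "smooth_vf_on U u \<Longrightarrow> smooth_on U (\<lambda>z. lower g u z a)"
  unfolding lower_def
  by (intro smooth_on_sum[OF open_U] smooth_on_mult[OF open_U] metric_smooth smooth_vf_on_component)

lemma lower_differentiable: "smooth_vf_on U u \<Longrightarrow> y \<in> U \<Longrightarrow> (\<lambda>z. lower g u z a) differentiable (at y)"
  using lower_smooth smooth_on_differentiable_at[OF open_U] by blast

lemma partial_lower:
  assumes su: "smooth_vf_on U u" and y: "y \<in> U"
  shows "partial j (\<lambda>z. lower g u z a) y = (\<Sum>b\<in>UNIV. partial j (\<lambda>z. g z $ a $ b) y * u y $ b
             + g y $ a $ b * partial j (\<lambda>z. u z $ b) y)"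
proof -
  have "partial j (\<lambda>z. lower g u z a) y = partial j (\<lambda>z. \<Sum>b\<in>UNIV. g z $ a $ b * u z $ b) y"
    unfolding lower_def ..
  also have "\<dots> = (\<Sum>b\<in>UNIV. partial j (\<lambda>z. g z $ a $ b * u z $ b) y)"
    using metric_differentiable[OF y] smooth_vf_on_differentiable[OF open_U su y]
    by (intro partial_sum) (auto intro: differentiable_mult)
  also have "\<dots> = (\<Sum>b\<in>UNIV. partial j (\<lambda>z. g z $ a $ b) y * u y $ b
             + g y $ a $ b * partial j (\<lambda>z. u z $ b) y)"
    using metric_differentiable[OF y] smooth_vf_on_differentiable[OF open_U su y]
    by (intro sum.cong refl partial_mult)
  finally show ?thesis .
qed

lemma ginv_lower:
  assumes y: "y \<in> U"
  shows "(\<Sum>m\<in>UNIV. ginv g y k m * lower g u y m) = u y $ k"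
proof -
  have "(\<Sum>m\<in>UNIV. ginv g y k m * lower g u y m)
      = (\<Sum>b\<in>UNIV. (\<Sum>m\<in>UNIV. ginv g y k m * g y $ m $ b) * u y $ b)"
    unfolding lower_def by (rule sum_mult_sum_swap)
  also have "\<dots> = u y $ k" using ginv_metric[OF y] by (simp add: sum_delta_mult)
  finally show ?thesis .
qed

lemma christoffel_lower:
  assumes y: "y \<in> U"
  shows "(\<Sum>l\<in>UNIV. christoffel g y l j a * lower g u y l)
    = (\<Sum>b\<in>UNIV. (1/2) * (partial j (\<lambda>z. g z $ a $ b) y
        + partial a (\<lambda>z. g z $ j $ b) y - partial b (\<lambda>z. g z $ j $ a) y) * u y $ b)"
proof -
  have "(\<Sum>l\<in>UNIV. christoffel g y l j a * lower g u y l)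
      = (\<Sum>b\<in>UNIV. (\<Sum>l\<in>UNIV. christoffel g y l j a * g y $ l $ b) * u y $ b)"
    unfolding lower_def by (rule sum_mult_sum_swap)
  also have "\<dots> = (\<Sum>b\<in>UNIV. (\<Sum>l\<in>UNIV. g y $ b $ l * christoffel g y l j a) * u y $ b)"
    using metric_sym[OF y] by (simp add: mult.commute)
  finally show ?thesis by (simp only: metric_christoffel[OF y])
qed

lemma sum_ginv_lower:
  assumes y: "y \<in> U"
  shows "(\<Sum>k\<in>UNIV. (\<Sum>m\<in>UNIV. ginv g y k m * X m) * lower g w y k) = (\<Sum>m\<in>UNIV. X m * w y $ m)"
proof -
  have "(\<Sum>k\<in>UNIV. (\<Sum>m\<in>UNIV. ginv g y k m * X m) * lower g w y k)
      = (\<Sum>k\<in>UNIV. \<Sum>m\<in>UNIV. X m * (ginv g y m k * lower g w y k))"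
    unfolding sum_distrib_right
  proof (intro sum.cong refl)
    fix k m
    show "ginv g y k m * X m * lower g w y k = X m * (ginv g y m k * lower g w y k)"
      using ginv_sym[OF y, of k m] by simp
  qed
  also have "\<dots> = (\<Sum>m\<in>UNIV. X m * (\<Sum>k\<in>UNIV. ginv g y m k * lower g w y k))"
    by (subst sum.swap) (simp add: sum_distrib_left)
  finally show ?thesis using ginv_lower[OF y] by simp
qed

text \<open>Metric compatibility \<open>\<nabla>\<^sub>j u\<^sup>k = g\<^sup>k\<^sup>m \<nabla>\<^sub>j u\<^sub>m\<close>, written out in coordinates.\<close>
lemma partial_upper:
  assumes su: "smooth_vf_on U u" and y: "y \<in> U"
  shows "partial j (\<lambda>z. u z $ k) y = (\<Sum>m\<in>UNIV. ginv g y k m * cov_deriv g u y j m)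
            - (\<Sum>l\<in>UNIV. christoffel g y k j l * u y $ l)"
proof -
  let ?dg = "\<lambda>a b. partial j (\<lambda>z. g z $ a $ b) y"
  let ?du = "\<lambda>b. partial j (\<lambda>z. u z $ b) y"
  let ?R = "\<lambda>k. (\<Sum>m\<in>UNIV. ginv g y k m * cov_deriv g u y j m)
      - (\<Sum>l\<in>UNIV. christoffel g y k j l * u y $ l)"
  have "(\<Sum>b\<in>UNIV. g y $ a $ b * ?du b) = (\<Sum>b\<in>UNIV. g y $ a $ b * ?R b)" for a
  proof -
    have S1: "(\<Sum>b\<in>UNIV. g y $ a $ b * (\<Sum>m\<in>UNIV. ginv g y b m * cov_deriv g u y j m))
        = cov_deriv g u y j a"
      by (simp only: sum_mult_sum_swap metric_ginv[OF y] sum_delta_mult)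
    have S2: "(\<Sum>b\<in>UNIV. g y $ a $ b * (\<Sum>l\<in>UNIV. christoffel g y b j l * u y $ l))
       = (\<Sum>l\<in>UNIV. (1/2) * (?dg l a
           + partial l (\<lambda>z. g z $ j $ a) y - partial a (\<lambda>z. g z $ j $ l) y) * u y $ l)"
      by (simp only: sum_mult_sum_swap metric_christoffel[OF y])
    have C: "cov_deriv g u y j a = (\<Sum>b\<in>UNIV. ?dg a b * u y $ b + g y $ a $ b * ?du b)
        - (\<Sum>b\<in>UNIV. (1/2) * (?dg a b
            + partial a (\<lambda>z. g z $ j $ b) y - partial b (\<lambda>z. g z $ j $ a) y) * u y $ b)"
      unfolding cov_deriv_def christoffel_lower[OF y] partial_lower[OF su y] ..
    have "(\<Sum>b\<in>UNIV. g y $ a $ b * ?R b) = cov_deriv g u y j a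
       - (\<Sum>l\<in>UNIV. (1/2) * (?dg l a
           + partial l (\<lambda>z. g z $ j $ a) y - partial a (\<lambda>z. g z $ j $ l) y) * u y $ l)"
      by (simp only: right_diff_distrib sum_subtractf S1 S2)
    also have "\<dots> = (\<Sum>b\<in>UNIV. ?dg a b * u y $ b + g y $ a $ b * ?du b
        - (1/2) * (?dg a b + partial a (\<lambda>z. g z $ j $ b) y
            - partial b (\<lambda>z. g z $ j $ a) y) * u y $ b
        - (1/2) * (?dg b a + partial b (\<lambda>z. g z $ j $ a) y
            - partial a (\<lambda>z. g z $ j $ b) y) * u y $ b)"
      unfolding C by (simp only: sum_subtractf)
    also have "\<dots> = (\<Sum>b\<in>UNIV. g y $ a $ b * ?du b)"
    proof (rule sum.cong[OF refl])
      fix b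
      have "?dg b a = ?dg a b" by (rule partial_metric_sym[OF y])
      then show "?dg a b * u y $ b + g y $ a $ b * ?du b
        - (1/2) * (?dg a b + partial a (\<lambda>z. g z $ j $ b) y
            - partial b (\<lambda>z. g z $ j $ a) y) * u y $ b
        - (1/2) * (?dg b a + partial b (\<lambda>z. g z $ j $ a) y
            - partial a (\<lambda>z. g z $ j $ b) y) * u y $ b
        = g y $ a $ b * ?du b" by (simp add: algebra_simps)
    qed
    finally show ?thesis by simp
  qed
  then show ?thesis by (rule metric_cancel[OF y, where v = ?du and w = ?R])
qed

lemma gprod_sym:
  assumes y: "y \<in> U"
  shows "gprod g v w y = gprod g w v y"
proof -
  have "gprod g v w y = (\<Sum>k\<in>UNIV. v y $ k * (\<Sum>j\<in>UNIV. g y $ k $ j * w y $ j))"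
    unfolding gprod_def lower_def ..
  also have "\<dots> = (\<Sum>j\<in>UNIV. (\<Sum>k\<in>UNIV. v y $ k * g y $ k $ j) * w y $ j)" by (rule sum_mult_sum_swap)
  also have "\<dots> = (\<Sum>j\<in>UNIV. w y $ j * (\<Sum>k\<in>UNIV. g y $ j $ k * v y $ k))"
    using metric_sym[OF y] by (simp add: mult.commute)
  also have "\<dots> = gprod g w v y" unfolding gprod_def lower_def ..
  finally show ?thesis .
qed

lemma christoffel_trace_eq:
  assumes y: "y \<in> U"
  shows "christoffel_trace g y l = (1/2) * (\<Sum>k\<in>UNIV. \<Sum>m\<in>UNIV. ginv g y k m
      * partial l (\<lambda>z. g z $ k $ m) y)"
proof -
  have sw: "(\<Sum>k\<in>UNIV. \<Sum>m\<in>UNIV. ginv g y k m * partial k (\<lambda>z. g z $ l $ m) y)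
     = (\<Sum>k\<in>UNIV. \<Sum>m\<in>UNIV. ginv g y k m * partial m (\<lambda>z. g z $ k $ l) y)"
  proof -
    have "(\<Sum>k\<in>UNIV. \<Sum>m\<in>UNIV. ginv g y k m * partial k (\<lambda>z. g z $ l $ m) y)
       = (\<Sum>m\<in>UNIV. \<Sum>k\<in>UNIV. ginv g y k m * partial k (\<lambda>z. g z $ l $ m) y)" by (rule sum.swap)
    also have "\<dots> = (\<Sum>m\<in>UNIV. \<Sum>k\<in>UNIV. ginv g y m k * partial k (\<lambda>z. g z $ m $ l) y)"
    proof (intro sum.cong refl)
      fix m k
      have "ginv g y k m = ginv g y m k" by (rule ginv_sym[OF y])
      moreover have "partial k (\<lambda>z. g z $ l $ m) y = partial k (\<lambda>z. g z $ m $ l) y"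
        by (rule partial_metric_sym[OF y])
      ultimately show "ginv g y k m * partial k (\<lambda>z. g z $ l $ m) y
          = ginv g y m k * partial k (\<lambda>z. g z $ m $ l) y"
        by simp
    qed
    finally show ?thesis .
  qed
  have "christoffel_trace g y l = (1/2) * (\<Sum>k\<in>UNIV. \<Sum>m\<in>UNIV. ginv g y k m
      * partial k (\<lambda>z. g z $ l $ m) y
      + ginv g y k m * partial l (\<lambda>z. g z $ k $ m) y
          - ginv g y k m * partial m (\<lambda>z. g z $ k $ l) y)"
    unfolding christoffel_trace_def christoffel_def by (simp add: sum_distrib_left algebra_simps)
  also have "\<dots> = (1/2) * ((\<Sum>k\<in>UNIV. \<Sum>m\<in>UNIV. ginv g y k m * partial k (\<lambda>z. g z $ l $ m) y)
      + (\<Sum>k\<in>UNIV. \<Sum>m\<in>UNIV. ginv g y k m * partial l (\<lambda>z. g z $ k $ m) y)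
      - (\<Sum>k\<in>UNIV. \<Sum>m\<in>UNIV. ginv g y k m * partial m (\<lambda>z. g z $ k $ l) y))"
    by (simp only: sum.distrib sum_subtractf)
  also have "\<dots> = (1/2) * (\<Sum>k\<in>UNIV. \<Sum>m\<in>UNIV. ginv g y k m * partial l (\<lambda>z. g z $ k $ m) y)"
    unfolding sw by simp
  finally show ?thesis .
qed

lemma partial_metric_differentiable: "y \<in> U \<Longrightarrow> partial l (\<lambda>z. g z $ k $ m) differentiable (at y)"
  using smooth_on_differentiable_at[OF open_U smooth_on_partial[OF metric_smooth]] by blast

lemma christoffel_trace_differentiable:
  assumes y: "y \<in> U"
  shows "(\<lambda>z. christoffel_trace g z l) differentiable (at y)"
proof -
  have "(\<lambda>z. (1/2) * (\<Sum>k\<in>UNIV. \<Sum>m\<in>UNIV. ginv g z k m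
      * partial l (\<lambda>z. g z $ k $ m) z)) differentiable (at y)"
    using ginv_differentiable[OF y] partial_metric_differentiable[OF y]
    by (intro differentiable_mult differentiable_const differentiable_sum) auto
  then show ?thesis using differentiable_transform_open[OF open_U y] christoffel_trace_eq
    by (metis (no_types, lifting))
qed

lemma partial_christoffel_trace:
  assumes y: "y \<in> U"
  shows "partial j (\<lambda>z. christoffel_trace g z l) y = (1/2) * (\<Sum>k\<in>UNIV. \<Sum>m\<in>UNIV.
     partial j (\<lambda>z. ginv g z k m) y * partial l (\<lambda>z. g z $ k $ m) y
     + ginv g y k m * partial j (partial l (\<lambda>z. g z $ k $ m)) y)"
proof -
  have "partial j (\<lambda>z. christoffel_trace g z l) y
      = partial j (\<lambda>z. (1/2) * (\<Sum>k\<in>UNIV. \<Sum>m\<in>UNIV. ginv g z k m * partial l (\<lambda>z. g z $ k $ m) z)) y"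
    using christoffel_trace_eq by (intro partial_cong[OF open_U y]) auto
  also have "\<dots> = (1/2) * partial j (\<lambda>z. \<Sum>k\<in>UNIV. \<Sum>m\<in>UNIV. ginv g z k m
      * partial l (\<lambda>z. g z $ k $ m) z) y"
    using ginv_differentiable[OF y] partial_metric_differentiable[OF y]
    by (intro partial_cmult differentiable_sum differentiable_mult) auto
  also have "partial j (\<lambda>z. \<Sum>k\<in>UNIV. \<Sum>m\<in>UNIV. ginv g z k m * partial l (\<lambda>z. g z $ k $ m) z) y
     = (\<Sum>k\<in>UNIV. partial j (\<lambda>z. \<Sum>m\<in>UNIV. ginv g z k m * partial l (\<lambda>z. g z $ k $ m) z) y)"
    using ginv_differentiable[OF y] partial_metric_differentiable[OF y]
    by (intro partial_sum differentiable_sum differentiable_mult) auto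
  also have "\<dots> = (\<Sum>k\<in>UNIV. \<Sum>m\<in>UNIV. partial j (\<lambda>z. ginv g z k m * partial l (\<lambda>z. g z $ k $ m) z) y)"
    using ginv_differentiable[OF y] partial_metric_differentiable[OF y]
    by (intro sum.cong refl partial_sum differentiable_mult) auto
  also have "\<dots> = (\<Sum>k\<in>UNIV. \<Sum>m\<in>UNIV.
     partial j (\<lambda>z. ginv g z k m) y * partial l (\<lambda>z. g z $ k $ m) y
     + ginv g y k m * partial j (partial l (\<lambda>z. g z $ k $ m)) y)"
    using ginv_differentiable[OF y] partial_metric_differentiable[OF y]
    by (intro sum.cong refl partial_mult) auto
  finally show ?thesis .
qed

text \<open>\<open>\<Gamma>\<^sup>k\<^sub>k\<^sub>l = \<partial>\<^sub>l log \<surd>|det g|\<close> is a gradient; here the symmetry of its derivative is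
  verified directly from the formula for the derivative of \<open>g\<^sup>-\<^sup>1\<close>.\<close>
lemma partial_christoffel_trace_sym:
  assumes y: "y \<in> U"
  shows "partial j (\<lambda>z. christoffel_trace g z l) y = partial l (\<lambda>z. christoffel_trace g z j) y"
proof -
  let ?H = "ginv g y" and ?D = "\<lambda>j a b. partial j (\<lambda>z. g z $ a $ b) y"
  have ss: "partial j (partial l (\<lambda>z. g z $ k $ m)) y
      = partial l (partial j (\<lambda>z. g z $ k $ m)) y" for k m
    using partial_commute_C2[OF open_U y smooth_on_imp_C2[OF metric_smooth]] by blast
  have T: "(\<Sum>k\<in>UNIV. \<Sum>m\<in>UNIV. (\<Sum>a\<in>UNIV. \<Sum>b\<in>UNIV. ?H k a * ?D j a b * ?H b m) * ?D l k m)
       = (\<Sum>k\<in>UNIV. \<Sum>m\<in>UNIV. (\<Sum>a\<in>UNIV. \<Sum>b\<in>UNIV. ?H k a * ?D l a b * ?H b m) * ?D j k m)"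
    by (rule sum_sandwich_swap) (rule ginv_sym[OF y])
  have "partial j (\<lambda>z. christoffel_trace g z l) y
      = (1/2) * ((\<Sum>k\<in>UNIV. \<Sum>m\<in>UNIV. - (\<Sum>a\<in>UNIV. \<Sum>b\<in>UNIV. ?H k a * ?D j a b * ?H b m) * ?D l k m)
     + (\<Sum>k\<in>UNIV. \<Sum>m\<in>UNIV. ?H k m * partial j (partial l (\<lambda>z. g z $ k $ m)) y))"
    unfolding partial_christoffel_trace[OF y] partial_ginv[OF y] by (simp only: sum.distrib)
  also have "\<dots> = (1/2) * ((\<Sum>k\<in>UNIV. \<Sum>m\<in>UNIV.
      - (\<Sum>a\<in>UNIV. \<Sum>b\<in>UNIV. ?H k a * ?D l a b * ?H b m) * ?D j k m)
     + (\<Sum>k\<in>UNIV. \<Sum>m\<in>UNIV. ?H k m * partial l (partial j (\<lambda>z. g z $ k $ m)) y))"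
    using T ss by (simp add: sum_negf)
  also have "\<dots> = partial l (\<lambda>z. christoffel_trace g z j) y"
    unfolding partial_christoffel_trace[OF y] partial_ginv[OF y] by (simp only: sum.distrib)
  finally show ?thesis .
qed

end

section \<open>Divergence and Lie bracket\<close>

definition grad :: "(real^'n::finite \<Rightarrow> real) \<Rightarrow> real^'n \<Rightarrow> real^'n" where
  "grad f x = (\<chi> i. partial i f x)"

definition covector :: "(real^'n::finite \<Rightarrow> real^'n^'n) \<Rightarrow> (real^'n \<Rightarrow> real^'n) \<Rightarrow> real^'n \<Rightarrow> real^'n"
  where "covector g v x = (\<chi> i. lower g v x i)"

definition divergence :: "(real^'n::finite \<Rightarrow> real^'n^'n) \<Rightarrow> (real^'n \<Rightarrow> real^'n) \<Rightarrow> real^'n \<Rightarrow> real"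
  where "divergence g v y =
    (\<Sum>k\<in>UNIV. partial k (\<lambda>z. v z $ k) y) + (\<Sum>l\<in>UNIV. christoffel_trace g y l * v y $ l)"

definition lie_bracket :: "(real^'n::finite \<Rightarrow> real^'n) \<Rightarrow> (real^'n \<Rightarrow> real^'n) \<Rightarrow> real^'n \<Rightarrow> real^'n"
  where "lie_bracket u w y = (\<chi> k. \<Sum>j\<in>UNIV.
    u y $ j * partial j (\<lambda>z. w z $ k) y - w y $ j * partial j (\<lambda>z. u z $ k) y)"

lemma inner_grad: "v \<bullet> grad f x = (\<Sum>k\<in>UNIV. v $ k * partial k f x)"
  by (simp add: grad_def inner_vec_def)

lemma inner_covector: "v x \<bullet> covector g w x = gprod g v w x"
  by (simp add: covector_def gprod_def inner_vec_def)

lemma grad_eq_scaleR_covector_iff: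
  "grad f x = - (v x \<bullet> grad f x) *\<^sub>R covector g v x
    \<longleftrightarrow> (\<forall>i. partial i f x = - lower g v x i * (\<Sum>k\<in>UNIV. v x $ k * partial k f x))"
proof -
  define s where "s = (\<Sum>k\<in>UNIV. v x $ k * partial k f x)"
  have "v x \<bullet> grad f x = s" by (simp add: s_def inner_grad)
  then show ?thesis unfolding s_def[symmetric]
    by (simp add: vec_eq_iff grad_def covector_def mult.commute)
qed

lemma grad_cong:
  assumes "open U" "x \<in> U" "\<And>y. y \<in> U \<Longrightarrow> f y = h y"
  shows "grad f x = grad h x"
  unfolding grad_def using partial_cong[OF assms] by simp

lemma grad_cmult: "f differentiable (at x) \<Longrightarrow> grad (\<lambda>y. c * f y) x = c *\<^sub>R grad f x"
  by (simp add: grad_def vec_eq_iff partial_cmult)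

lemma grad_diff:
  "f differentiable (at x) \<Longrightarrow> h differentiable (at x) \<Longrightarrow> grad (\<lambda>y. f y - h y) x = grad f x - grad h x"
  by (simp add: grad_def vec_eq_iff partial_diff)

lemma grad_mult:
  "f differentiable (at x) \<Longrightarrow> h differentiable (at x) \<Longrightarrow>
    grad (\<lambda>y. f y * h y) x = h x *\<^sub>R grad f x + f x *\<^sub>R grad h x"
  by (simp add: grad_def vec_eq_iff partial_mult)

lemma divergence_cong:
  assumes "open U" "x \<in> U" "\<And>y. y \<in> U \<Longrightarrow> v y = v' y"
  shows "divergence g v x = divergence g v' x"
proof -
  have "partial k (\<lambda>z. v z $ k) x = partial k (\<lambda>z. v' z $ k) x" for k
    by (rule partial_cong[OF assms(1,2)]) (simp add: assms(3))
  then show ?thesis unfolding divergence_def using assms(2,3) by simp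
qed

lemma divergence_scaleR_add:
  assumes f: "f differentiable (at x)" and h: "h differentiable (at x)"
    and v: "\<And>k. (\<lambda>z. v z $ k) differentiable (at x)"
    and u: "\<And>k. (\<lambda>z. u z $ k) differentiable (at x)"
  shows "divergence g (\<lambda>z. f z *\<^sub>R v z + h z *\<^sub>R u z) x
    = f x * divergence g v x + h x * divergence g u x + v x \<bullet> grad f x + u x \<bullet> grad h x"
proof -
  have "partial k (\<lambda>z. (f z *\<^sub>R v z + h z *\<^sub>R u z) $ k) x
      = partial k f x * v x $ k + f x * partial k (\<lambda>z. v z $ k) x
        + (partial k h x * u x $ k + h x * partial k (\<lambda>z. u z $ k) x)" for k
    using partial_add[OF differentiable_mult[OF f v] differentiable_mult[OF h u]]
    by (simp add: partial_mult[OF f v] partial_mult[OF h u])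
  then show ?thesis
    by (simp add: divergence_def inner_grad sum.distrib sum_distrib_left algebra_simps)
qed

lemma sum_bracket_divergence_identity:
  fixes uu ww G :: "'n::finite \<Rightarrow> real" and du dw dG :: "'n \<Rightarrow> 'n \<Rightarrow> real" and ddu ddw :: "'n
      \<Rightarrow> 'n \<Rightarrow> 'n \<Rightarrow> real"
  assumes su: "\<And>k j l. ddu k j l = ddu j k l" and sw: "\<And>k j l. ddw k j l = ddw j k l"
    and sG: "\<And>j l. dG j l = dG l j"
  shows "(\<Sum>k\<in>UNIV. \<Sum>j\<in>UNIV. du k j * dw j k + uu j * ddw k j k - (dw k j * du j k
      + ww j * ddu k j k))
     + (\<Sum>l\<in>UNIV. G l * (\<Sum>j\<in>UNIV. uu j * dw j l - ww j * du j l))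
   = (\<Sum>j\<in>UNIV. uu j * ((\<Sum>k\<in>UNIV. ddw j k k) + (\<Sum>l\<in>UNIV. dG j l * ww l + G l * dw j l)))
     - (\<Sum>j\<in>UNIV. ww j * ((\<Sum>k\<in>UNIV. ddu j k k) + (\<Sum>l\<in>UNIV. dG j l * uu l + G l * du j l)))"
proof -
  have i: "(\<Sum>k\<in>UNIV. \<Sum>j\<in>UNIV. du k j * dw j k) = (\<Sum>k\<in>UNIV. \<Sum>j\<in>UNIV. dw k j * du j k)"
    by (subst sum.swap) (simp add: mult.commute)
  have ii: "(\<Sum>k\<in>UNIV. \<Sum>j\<in>UNIV. uu j * ddw k j k) = (\<Sum>j\<in>UNIV. uu j * (\<Sum>k\<in>UNIV. ddw j k k))"
    by (subst sum.swap) (simp add: sum_distrib_left sw)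
  have iii: "(\<Sum>k\<in>UNIV. \<Sum>j\<in>UNIV. ww j * ddu k j k) = (\<Sum>j\<in>UNIV. ww j * (\<Sum>k\<in>UNIV. ddu j k k))"
    by (subst sum.swap) (simp add: sum_distrib_left su)
  have iv: "(\<Sum>l\<in>UNIV. G l * (\<Sum>j\<in>UNIV. uu j * dw j l - ww j * du j l))
     = (\<Sum>j\<in>UNIV. uu j * (\<Sum>l\<in>UNIV. G l * dw j l)) - (\<Sum>j\<in>UNIV. ww j * (\<Sum>l\<in>UNIV. G l * du j l))"
  proof -
    have "(\<Sum>l\<in>UNIV. G l * (\<Sum>j\<in>UNIV. uu j * dw j l - ww j * du j l))
        = (\<Sum>l\<in>UNIV. \<Sum>j\<in>UNIV. uu j * (G l * dw j l) - ww j * (G l * du j l))"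
      by (simp add: sum_distrib_left algebra_simps)
    also have "\<dots> = (\<Sum>j\<in>UNIV. \<Sum>l\<in>UNIV. uu j * (G l * dw j l) - ww j * (G l * du j l))"
      by (rule sum.swap)
    finally show ?thesis by (simp add: sum_subtractf sum_distrib_left)
  qed
  have v: "(\<Sum>j\<in>UNIV. uu j * (\<Sum>l\<in>UNIV. dG j l * ww l)) = (\<Sum>j\<in>UNIV. ww j * (\<Sum>l\<in>UNIV. dG j l * uu l))"
  proof -
    have "(\<Sum>j\<in>UNIV. uu j * (\<Sum>l\<in>UNIV. dG j l * ww l))
        = (\<Sum>j\<in>UNIV. \<Sum>l\<in>UNIV. ww l * (dG l j * uu j))"
      using sG by (simp add: sum_distrib_left mult_ac)
    also have "\<dots> = (\<Sum>l\<in>UNIV. \<Sum>j\<in>UNIV. ww l * (dG l j * uu j))" by (rule sum.swap)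
    finally show ?thesis by (simp add: sum_distrib_left)
  qed
  have L: "(\<Sum>k\<in>UNIV. \<Sum>j\<in>UNIV. du k j * dw j k + uu j * ddw k j k - (dw k j * du j k
      + ww j * ddu k j k))
     = (\<Sum>k\<in>UNIV. \<Sum>j\<in>UNIV. du k j * dw j k) + (\<Sum>k\<in>UNIV. \<Sum>j\<in>UNIV. uu j * ddw k j k)
       - (\<Sum>k\<in>UNIV. \<Sum>j\<in>UNIV. dw k j * du j k) - (\<Sum>k\<in>UNIV. \<Sum>j\<in>UNIV. ww j * ddu k j k)"
    by (simp add: sum.distrib sum_subtractf)
  have R: "(\<Sum>j\<in>UNIV. uu j * ((\<Sum>k\<in>UNIV. ddw j k k) + (\<Sum>l\<in>UNIV. dG j l * ww l + G l * dw j l)))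
     - (\<Sum>j\<in>UNIV. ww j * ((\<Sum>k\<in>UNIV. ddu j k k) + (\<Sum>l\<in>UNIV. dG j l * uu l + G l * du j l)))
     = (\<Sum>j\<in>UNIV. uu j * (\<Sum>k\<in>UNIV. ddw j k k)) + (\<Sum>j\<in>UNIV. uu j * (\<Sum>l\<in>UNIV. dG j l * ww l))
       + (\<Sum>j\<in>UNIV. uu j * (\<Sum>l\<in>UNIV. G l * dw j l))
       - (\<Sum>j\<in>UNIV. ww j * (\<Sum>k\<in>UNIV. ddu j k k)) - (\<Sum>j\<in>UNIV. ww j * (\<Sum>l\<in>UNIV. dG j l * uu l))
       - (\<Sum>j\<in>UNIV. ww j * (\<Sum>l\<in>UNIV. G l * du j l))"
    by (simp add: sum.distrib distrib_left)
  show ?thesis unfolding L R iv using i ii iii v by linarith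
qed

context lorentz_chart
begin

lemma partial_gprod:
  assumes su: "smooth_vf_on U u" and sw: "smooth_vf_on U w" and y: "y \<in> U"
  shows "partial i (\<lambda>z. gprod g u w z) y = (\<Sum>m\<in>UNIV. cov_deriv g u y i m * w y $ m)
     + (\<Sum>k\<in>UNIV. u y $ k * cov_deriv g w y i k)"
proof -
  let ?W = "\<lambda>k. lower g w y k" and ?\<Gamma> = "christoffel g y"
  have "partial i (\<lambda>z. gprod g u w z) y = (\<Sum>k\<in>UNIV. partial i (\<lambda>z. u z $ k * lower g w z k) y)"
    unfolding gprod_def
      using smooth_vf_on_differentiable[OF open_U su y] lower_differentiable[OF sw y]
    by (intro partial_sum) (auto intro: differentiable_mult)
  also have "\<dots> = (\<Sum>k\<in>UNIV. partial i (\<lambda>z. u z $ k) y * ?W k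
      + u y $ k * partial i (\<lambda>z. lower g w z k) y)"
    using smooth_vf_on_differentiable[OF open_U su y] lower_differentiable[OF sw y]
    by (intro sum.cong refl partial_mult)
  also have "\<dots> = (\<Sum>k\<in>UNIV. ((\<Sum>m\<in>UNIV. ginv g y k m * cov_deriv g u y i m)
      - (\<Sum>l\<in>UNIV. ?\<Gamma> k i l * u y $ l)) * ?W k
        + u y $ k * (cov_deriv g w y i k + (\<Sum>l\<in>UNIV. ?\<Gamma> l i k * ?W l)))"
    unfolding partial_upper[OF su y] cov_deriv_def by simp
  also have "\<dots> = (\<Sum>k\<in>UNIV. (\<Sum>m\<in>UNIV. ginv g y k m * cov_deriv g u y i m) * ?W k)
      - (\<Sum>k\<in>UNIV. (\<Sum>l\<in>UNIV. ?\<Gamma> k i l * u y $ l) * ?W k)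
      + (\<Sum>k\<in>UNIV. u y $ k * cov_deriv g w y i k) + (\<Sum>k\<in>UNIV. u y $ k * (\<Sum>l\<in>UNIV. ?\<Gamma> l i k * ?W l))"
    by (simp add: sum.distrib sum_subtractf algebra_simps)
  also have "(\<Sum>k\<in>UNIV. (\<Sum>m\<in>UNIV. ginv g y k m * cov_deriv g u y i m) * ?W k)
      = (\<Sum>m\<in>UNIV. cov_deriv g u y i m * w y $ m)"
    by (rule sum_ginv_lower[OF y])
  also have "(\<Sum>k\<in>UNIV. u y $ k * (\<Sum>l\<in>UNIV. ?\<Gamma> l i k * ?W l))
      = (\<Sum>k\<in>UNIV. (\<Sum>l\<in>UNIV. ?\<Gamma> k i l * u y $ l) * ?W k)"
  proof -
    have "(\<Sum>k\<in>UNIV. u y $ k * (\<Sum>l\<in>UNIV. ?\<Gamma> l i k * ?W l))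
        = (\<Sum>k\<in>UNIV. \<Sum>l\<in>UNIV. u y $ k * ?\<Gamma> l i k * ?W l)"
      by (simp add: sum_distrib_left mult.assoc)
    also have "\<dots> = (\<Sum>l\<in>UNIV. \<Sum>k\<in>UNIV. u y $ k * ?\<Gamma> l i k * ?W l)" by (rule sum.swap)
    also have "\<dots> = (\<Sum>k\<in>UNIV. (\<Sum>l\<in>UNIV. ?\<Gamma> k i l * u y $ l) * ?W k)"
      by (rule sum.cong[OF refl], simp add: sum_distrib_left mult_ac)
    finally show ?thesis .
  qed
  finally show ?thesis by simp
qed

lemma gprod_smooth: "smooth_vf_on U u \<Longrightarrow> smooth_vf_on U w \<Longrightarrow> smooth_on U (gprod g u w)"
  unfolding gprod_def[abs_def]
  by (intro smooth_on_sum[OF open_U] smooth_on_mult[OF open_U] smooth_vf_on_component lower_smooth)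

lemma partial_divergence:
  assumes sv: "smooth_vf_on U v" and x: "x \<in> U"
  shows "partial j (divergence g v) x = (\<Sum>k\<in>UNIV. partial j (partial k (\<lambda>z. v z $ k)) x)
    + (\<Sum>l\<in>UNIV. partial j (\<lambda>z. christoffel_trace g z l) x * v x $ l
        + christoffel_trace g x l * partial j (\<lambda>z. v z $ l) x)"
proof -
  have d1: "partial k (\<lambda>z. v z $ k) differentiable (at x)" for k
    using smooth_on_differentiable_at[OF open_U
        smooth_on_partial[OF smooth_vf_on_component[OF sv]] x] .
  have d2: "(\<lambda>z. v z $ l) differentiable (at x)" for l
    using smooth_vf_on_differentiable[OF open_U sv x] .
  note d3 = christoffel_trace_differentiable[OF x]
  have "partial j (divergence g v) x = partial j (\<lambda>y. \<Sum>k\<in>UNIV. partial k (\<lambda>z. v z $ k) y) x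
      + partial j (\<lambda>y. \<Sum>l\<in>UNIV. christoffel_trace g y l * v y $ l) x"
    unfolding divergence_def[abs_def] using d1 d2 d3
    by (intro partial_add differentiable_sum differentiable_mult) auto
  also have "\<dots> = (\<Sum>k\<in>UNIV. partial j (partial k (\<lambda>z. v z $ k)) x)
      + (\<Sum>l\<in>UNIV. partial j (\<lambda>y. christoffel_trace g y l * v y $ l) x)"
    using d1 d2 d3 by (simp add: partial_sum differentiable_mult)
  also have "\<dots> = (\<Sum>k\<in>UNIV. partial j (partial k (\<lambda>z. v z $ k)) x)
      + (\<Sum>l\<in>UNIV. partial j (\<lambda>z. christoffel_trace g z l) x * v x $ l
          + christoffel_trace g x l * partial j (\<lambda>z. v z $ l) x)"
    using d2 d3 by (simp add: partial_mult)
  finally show ?thesis .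
qed

lemma partial_lie_bracket_component:
  assumes su: "smooth_vf_on U u" and sw: "smooth_vf_on U w" and x: "x \<in> U"
  shows "partial k (\<lambda>z. lie_bracket u w z $ k) x
    = (\<Sum>j\<in>UNIV. partial k (\<lambda>z. u z $ j) x * partial j (\<lambda>z. w z $ k) x
        + u x $ j * partial k (partial j (\<lambda>z. w z $ k)) x
        - (partial k (\<lambda>z. w z $ j) x * partial j (\<lambda>z. u z $ k) x
        + w x $ j * partial k (partial j (\<lambda>z. u z $ k)) x))"
proof -
  have du: "(\<lambda>z. u z $ j) differentiable (at x)" "partial j (\<lambda>z. u z $ k) differentiable (at x)"
    and dw: "(\<lambda>z. w z $ j) differentiable (at x)" "partial j (\<lambda>z. w z $ k) differentiable (at x)"
    for j k
    using smooth_vf_on_differentiable[OF open_U su x] smooth_vf_on_differentiable[OF open_U sw x]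
      smooth_on_differentiable_at[OF open_U smooth_on_partial[OF smooth_vf_on_component[OF su]] x]
      smooth_on_differentiable_at[OF open_U smooth_on_partial[OF smooth_vf_on_component[OF sw]] x]
    by blast+
  have "partial k (\<lambda>z. lie_bracket u w z $ k) x = (\<Sum>j\<in>UNIV. partial k (\<lambda>y.
      u y $ j * partial j (\<lambda>z. w z $ k) y - w y $ j * partial j (\<lambda>z. u z $ k) y) x)"
    unfolding lie_bracket_def using du dw
    by (simp add: partial_sum differentiable_diff differentiable_mult)
  then show ?thesis using du dw
    by (simp add: partial_diff partial_mult differentiable_mult)
qed

text \<open>The first-derivative terms cancel pairwise, the second-derivative terms by Schwarz's theorem,
  and the Christoffel terms because \<open>\<partial>\<^sub>j \<Gamma>\<^sup>k\<^sub>k\<^sub>l\<close> is symmetric in \<open>j, l\<close>.\<close>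
lemma divergence_lie_bracket:
  assumes su: "smooth_vf_on U u" and sw: "smooth_vf_on U w" and x: "x \<in> U"
  shows "divergence g (lie_bracket u w) x
    = u x \<bullet> grad (divergence g w) x - w x \<bullet> grad (divergence g u) x"
proof -
  have "divergence g (lie_bracket u w) x
    = (\<Sum>k\<in>UNIV. \<Sum>j\<in>UNIV. partial k (\<lambda>z. u z $ j) x * partial j (\<lambda>z. w z $ k) x
        + u x $ j * partial k (partial j (\<lambda>z. w z $ k)) x
        - (partial k (\<lambda>z. w z $ j) x * partial j (\<lambda>z. u z $ k) x
        + w x $ j * partial k (partial j (\<lambda>z. u z $ k)) x))
     + (\<Sum>l\<in>UNIV. christoffel_trace g x l * (\<Sum>j\<in>UNIV.
        u x $ j * partial j (\<lambda>z. w z $ l) x - w x $ j * partial j (\<lambda>z. u z $ l) x))"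
    unfolding divergence_def partial_lie_bracket_component[OF su sw x]
    by (simp add: lie_bracket_def)
  also have "\<dots> = (\<Sum>j\<in>UNIV. u x $ j * ((\<Sum>k\<in>UNIV. partial j (partial k (\<lambda>z. w z $ k)) x)
        + (\<Sum>l\<in>UNIV. partial j (\<lambda>z. christoffel_trace g z l) x * w x $ l
            + christoffel_trace g x l * partial j (\<lambda>z. w z $ l) x)))
     - (\<Sum>j\<in>UNIV. w x $ j * ((\<Sum>k\<in>UNIV. partial j (partial k (\<lambda>z. u z $ k)) x)
        + (\<Sum>l\<in>UNIV. partial j (\<lambda>z. christoffel_trace g z l) x * u x $ l
            + christoffel_trace g x l * partial j (\<lambda>z. u z $ l) x)))"
  proof (rule sum_bracket_divergence_identity)
    show "partial k (partial j (\<lambda>z. u z $ l)) x = partial j (partial k (\<lambda>z. u z $ l)) x"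
      "partial k (partial j (\<lambda>z. w z $ l)) x = partial j (partial k (\<lambda>z. w z $ l)) x" for k j l
      using partial_commute_C2[OF open_U x smooth_on_imp_C2] smooth_vf_on_component su sw by blast+
    show "partial j (\<lambda>z. christoffel_trace g z l) x = partial l (\<lambda>z. christoffel_trace g z j) x"
      for j l
      by (rule partial_christoffel_trace_sym[OF x])
  qed
  also have "\<dots> = u x \<bullet> grad (divergence g w) x - w x \<bullet> grad (divergence g u) x"
    unfolding inner_grad partial_divergence[OF su x] partial_divergence[OF sw x] ..
  finally show ?thesis .
qed

end

section \<open>Torse-forming vector fields\<close>

definition torse_forming ::
  "(real^'n::finite \<Rightarrow> real^'n^'n) \<Rightarrow> (real^'n \<Rightarrow> real^'n) \<Rightarrow> (real^'n \<Rightarrow> real) \<Rightarrow> real^'n \<Rightarrow> bool"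
  where "torse_forming g v \<psi> y \<longleftrightarrow>
    (\<forall>i j. cov_deriv g v y i j = \<psi> y * (lower g v y i * lower g v y j + g y $ i $ j))"

context lorentz_chart
begin

lemma partial_upper_torse_forming:
  assumes sv: "smooth_vf_on U v" and y: "y \<in> U"
    and tf: "torse_forming g v \<psi> y"
  shows "partial j (\<lambda>z. v z $ k) y = \<psi> y * (lower g v y j * v y $ k + (if k = j then 1 else 0))
     - (\<Sum>l\<in>UNIV. christoffel g y k j l * v y $ l)"
proof -
  have cv: "cov_deriv g v y i j = \<psi> y * (lower g v y i * lower g v y j + g y $ i $ j)" for i j
    using tf unfolding torse_forming_def by blast
  have "(\<Sum>m\<in>UNIV. ginv g y k m * cov_deriv g v y j m)
      = (\<Sum>m\<in>UNIV. \<psi> y * lower g v y j * (ginv g y k m * lower g v y m)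
          + \<psi> y * (ginv g y k m * g y $ j $ m))"
    unfolding cv by (simp add: algebra_simps)
  also have "\<dots> = \<psi> y * lower g v y j * (\<Sum>m\<in>UNIV. ginv g y k m * lower g v y m)
      + \<psi> y * (\<Sum>m\<in>UNIV. ginv g y k m * g y $ j $ m)"
    by (simp only: sum.distrib sum_distrib_left)
  also have "\<dots> = \<psi> y * (lower g v y j * v y $ k + (if k = j then 1 else 0))"
    using ginv_lower[OF y] ginv_metric_transposed[OF y] by (simp add: algebra_simps)
  finally show ?thesis using partial_upper[OF sv y] by simp
qed

lemma directional_partial_torse_forming:
  assumes sv: "smooth_vf_on U v" and y: "y \<in> U" and tf: "torse_forming g v \<psi> y"
  shows "(\<Sum>j\<in>UNIV. X $ j * partial j (\<lambda>z. v z $ k) y)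
    = \<psi> y * ((X \<bullet> covector g v y) * v y $ k + X $ k)
      - (\<Sum>j\<in>UNIV. \<Sum>l\<in>UNIV. X $ j * (christoffel g y k j l * v y $ l))"
proof -
  have "(\<Sum>j\<in>UNIV. X $ j * partial j (\<lambda>z. v z $ k) y)
      = (\<Sum>j\<in>UNIV. \<psi> y * (X $ j * lower g v y j) * v y $ k + \<psi> y * (X $ j * (if k = j then 1 else 0))
          - (\<Sum>l\<in>UNIV. X $ j * (christoffel g y k j l * v y $ l)))"
    by (rule sum.cong[OF refl])
      (simp add: partial_upper_torse_forming[OF sv y tf] sum_distrib_left algebra_simps)
  also have "\<dots> = \<psi> y * (\<Sum>j\<in>UNIV. X $ j * lower g v y j) * v y $ k
      + \<psi> y * (\<Sum>j\<in>UNIV. X $ j * (if k = j then 1 else 0))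
      - (\<Sum>j\<in>UNIV. \<Sum>l\<in>UNIV. X $ j * (christoffel g y k j l * v y $ l))"
    by (simp only: sum.distrib sum_subtractf sum_distrib_left sum_distrib_right)
  also have "(\<Sum>j\<in>UNIV. X $ j * (if k = j then 1 else 0)) = X $ k"
    using sum_delta_mult[of k "\<lambda>j. X $ j"] by (simp add: mult.commute)
  finally show ?thesis by (simp add: covector_def inner_vec_def algebra_simps)
qed

lemma divergence_torse_forming:
  assumes sv: "smooth_vf_on U v" and y: "y \<in> U"
    and tf: "torse_forming g v \<psi> y"
    and vv: "gprod g v v y = -1"
  shows "divergence g v y = (real CARD('n) - 1) * \<psi> y"
proof -
  have "(\<Sum>k\<in>UNIV. partial k (\<lambda>z. v z $ k) y) = (\<Sum>k\<in>UNIV. \<psi> y * (lower g v y k * v y $ k) + \<psi> y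
     - (\<Sum>l\<in>UNIV. christoffel g y k k l * v y $ l))"
    by (rule sum.cong[OF refl]) (simp add: partial_upper_torse_forming[OF sv y tf] algebra_simps)
  also have "\<dots> = \<psi> y * (\<Sum>k\<in>UNIV. v y $ k * lower g v y k)
      + real CARD('n) * \<psi> y - (\<Sum>l\<in>UNIV. christoffel_trace g y l * v y $ l)"
  proof -
    have "(\<Sum>k\<in>UNIV. \<psi> y * (lower g v y k * v y $ k)
        + \<psi> y - (\<Sum>l\<in>UNIV. christoffel g y k k l * v y $ l))
      = \<psi> y * (\<Sum>k\<in>UNIV. lower g v y k * v y $ k)
          + (\<Sum>k\<in>(UNIV::'n set). \<psi> y) - (\<Sum>k\<in>UNIV. \<Sum>l\<in>UNIV. christoffel g y k k l * v y $ l)"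
      by (simp only: sum.distrib sum_subtractf sum_distrib_left)
    moreover have "(\<Sum>k\<in>UNIV. lower g v y k * v y $ k) = (\<Sum>k\<in>UNIV. v y $ k * lower g v y k)"
      by (simp add: mult.commute)
    moreover have "(\<Sum>k\<in>UNIV. \<Sum>l\<in>UNIV. christoffel g y k k l * v y $ l)
        = (\<Sum>l\<in>UNIV. christoffel_trace g y l * v y $ l)"
      unfolding christoffel_trace_def sum_distrib_right by (rule sum.swap)
    ultimately show ?thesis by simp
  qed
  also have "\<dots> = (real CARD('n) - 1) * \<psi> y - (\<Sum>l\<in>UNIV. christoffel_trace g y l * v y $ l)"
    using vv unfolding gprod_def by (simp add: algebra_simps)
  finally show ?thesis unfolding divergence_def by simp
qed

lemma partial_lower_sym_torse_forming:
  assumes y: "y \<in> U"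
    and tf: "torse_forming g v \<psi> y"
  shows "partial j (\<lambda>z. lower g v z i) y = partial i (\<lambda>z. lower g v z j) y"
proof -
  have cv: "cov_deriv g v y i j = \<psi> y * (lower g v y i * lower g v y j + g y $ i $ j)" for i j
    using tf unfolding torse_forming_def by blast
  have e: "partial j (\<lambda>z. lower g v z i) y
      = cov_deriv g v y j i + (\<Sum>k\<in>UNIV. christoffel g y k j i * lower g v y k)" for i j
    unfolding cov_deriv_def by simp
  show ?thesis unfolding e cv using metric_sym[OF y, of i j] christoffel_sym[OF y]
    by (simp add: mult.commute)
qed

lemma partial_gprod_torse_forming:
  assumes su: "smooth_vf_on U u" and sw: "smooth_vf_on U w" and y: "y \<in> U"
    and tfu: "torse_forming g u phi y" and tfw: "torse_forming g w lam y"
  shows "partial i (gprod g u w) y = phi y * (gprod g u w y * lower g u y i + lower g w y i)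
      + lam y * (gprod g u w y * lower g w y i + lower g u y i)"
proof -
  have du: "cov_deriv g u y i j = phi y * (lower g u y i * lower g u y j + g y $ i $ j)"
    and dw: "cov_deriv g w y i j = lam y * (lower g w y i * lower g w y j + g y $ i $ j)" for i j
    using tfu tfw unfolding torse_forming_def by blast+
  have a: "(\<Sum>m\<in>UNIV. cov_deriv g u y i m * w y $ m)
      = phi y * (lower g u y i * (\<Sum>m\<in>UNIV. w y $ m * lower g u y m)
      + (\<Sum>m\<in>UNIV. g y $ i $ m * w y $ m))"
    unfolding du by (simp add: sum_distrib_left sum.distrib algebra_simps)
  have b: "(\<Sum>k\<in>UNIV. u y $ k * cov_deriv g w y i k)
      = lam y * (lower g w y i * (\<Sum>k\<in>UNIV. u y $ k * lower g w y k)
      + (\<Sum>k\<in>UNIV. g y $ i $ k * u y $ k))"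
    unfolding dw by (simp add: sum_distrib_left sum.distrib algebra_simps)
  have c1: "(\<Sum>m\<in>UNIV. w y $ m * lower g u y m) = gprod g u w y"
    using gprod_sym[OF y, of w u] unfolding gprod_def by simp
  have c2: "(\<Sum>m\<in>UNIV. g y $ i $ m * w y $ m) = lower g w y i" "(\<Sum>k\<in>UNIV. g y $ i $ k * u y $ k)
      = lower g u y i"
    unfolding lower_def by simp_all
  have c3: "(\<Sum>k\<in>UNIV. u y $ k * lower g w y k) = gprod g u w y" unfolding gprod_def ..
  show ?thesis unfolding partial_gprod[OF su sw y] a b c1 c2 c3 by (simp add: algebra_simps)
qed

lemma grad_gprod_torse_forming:
  assumes "smooth_vf_on U u" "smooth_vf_on U w" "y \<in> U"
    and "torse_forming g u phi y" "torse_forming g w lam y"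
  shows "grad (gprod g u w) y = (phi y * gprod g u w y + lam y) *\<^sub>R covector g u y
    + (phi y + lam y * gprod g u w y) *\<^sub>R covector g w y"
  by (simp add: vec_eq_iff grad_def covector_def partial_gprod_torse_forming[OF assms]
      algebra_simps)

lemma lie_bracket_torse_forming:
  assumes su: "smooth_vf_on U u" and sw: "smooth_vf_on U w" and y: "y \<in> U"
    and tfu: "torse_forming g u phi y" and tfw: "torse_forming g w lam y"
  shows "lie_bracket u w y
    = (lam y * gprod g u w y - phi y) *\<^sub>R w y + (lam y - phi y * gprod g u w y) *\<^sub>R u y"
proof -
  have \<Gamma>: "(\<Sum>j\<in>UNIV. \<Sum>l\<in>UNIV. w y $ j * (christoffel g y k j l * u y $ l))
      = (\<Sum>j\<in>UNIV. \<Sum>l\<in>UNIV. u y $ j * (christoffel g y k j l * w y $ l))" for k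
  proof -
    have "(\<Sum>j\<in>UNIV. \<Sum>l\<in>UNIV. w y $ j * (christoffel g y k j l * u y $ l))
        = (\<Sum>l\<in>UNIV. \<Sum>j\<in>UNIV. w y $ j * (christoffel g y k j l * u y $ l))"
      by (rule sum.swap)
    also have "\<dots> = (\<Sum>l\<in>UNIV. \<Sum>j\<in>UNIV. u y $ l * (christoffel g y k l j * w y $ j))"
      by (intro sum.cong refl) (simp add: christoffel_sym[OF y, of k] mult_ac)
    finally show ?thesis .
  qed
  have "lie_bracket u w y $ k
      = ((lam y * gprod g u w y - phi y) *\<^sub>R w y + (lam y - phi y * gprod g u w y) *\<^sub>R u y) $ k" for k
    unfolding lie_bracket_def vec_lambda_beta sum_subtractf
      directional_partial_torse_forming[OF sw y tfw] directional_partial_torse_forming[OF su y tfu]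
      \<Gamma> inner_covector gprod_sym[OF y, of w u]
    by (simp add: algebra_simps)
  then show ?thesis by (simp add: vec_eq_iff)
qed

text \<open>The Hessian of \<open>c = u\<^sup>k w\<^sub>k\<close> is symmetric. The terms with \<open>\<partial>\<^sub>j u\<^sub>i\<close> and \<open>\<partial>\<^sub>j w\<^sub>i\<close>
  drop out, since the 1-forms \<open>u\<^sub>i\<close> and \<open>w\<^sub>i\<close> are closed (\<open>\<nabla>\<^sub>i u\<^sub>j\<close> is symmetric).\<close>
lemma torse_forming_gprod_integrability:
  assumes su: "smooth_vf_on U u" and sw: "smooth_vf_on U w"
    and sphi: "smooth_on U phi" and slam: "smooth_on U lam"
    and tfu: "\<forall>y\<in>U. torse_forming g u phi y" and tfw: "\<forall>y\<in>U. torse_forming g w lam y"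
    and x: "x \<in> U"
  defines "c \<equiv> gprod g u w x" and "P \<equiv> grad (gprod g u w) x"
    and "a \<equiv> grad lam x" and "b \<equiv> grad phi x"
    and "uc \<equiv> covector g u x" and "wc \<equiv> covector g w x"
  shows "b$j * (c * uc$i + wc$i) + phi x * P$j * uc$i + a$j * (c * wc$i + uc$i) + lam x * P$j * wc$i
       = b$i * (c * uc$j + wc$j) + phi x * P$i * uc$j + a$i * (c * wc$j + uc$j)
           + lam x * P$i * wc$j"
proof -
  have d: "phi differentiable (at x)" "lam differentiable (at x)"
      "gprod g u w differentiable (at x)"
      "(\<lambda>z. lower g u z i) differentiable (at x)" "(\<lambda>z. lower g w z i) differentiable (at x)" for i
    using smooth_on_differentiable_at[OF open_U _ x] sphi slam gprod_smooth[OF su sw]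
      lower_differentiable[OF su x] lower_differentiable[OF sw x] by blast+
  have hessian: "partial j (partial i (gprod g u w)) x
      = b$j * (c * uc$i + wc$i) + a$j * (c * wc$i + uc$i)
        + phi x * (P$j * uc$i + c * partial j (\<lambda>z. lower g u z i) x
            + partial j (\<lambda>z. lower g w z i) x)
        + lam x * (P$j * wc$i + c * partial j (\<lambda>z. lower g w z i) x
            + partial j (\<lambda>z. lower g u z i) x)"
    for i j
  proof -
    have "partial j (partial i (gprod g u w)) x
        = partial j (\<lambda>z. phi z * (gprod g u w z * lower g u z i + lower g w z i)
            + lam z * (gprod g u w z * lower g w z i + lower g u z i)) x"
      using tfu tfw by (intro partial_cong[OF open_U x] partial_gprod_torse_forming[OF su sw]) auto
    then show ?thesis using d
      by (simp add: partial_add partial_mult c_def P_def a_def b_def uc_def wc_def grad_def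
          covector_def algebra_simps)
  qed
  have "partial j (partial i (gprod g u w)) x = partial i (partial j (gprod g u w)) x"
    by (rule partial_commute_C2[OF open_U x smooth_on_imp_C2[OF gprod_smooth[OF su sw]]])
  moreover have "partial j (\<lambda>z. lower g u z i) x = partial i (\<lambda>z. lower g u z j) x"
      "partial j (\<lambda>z. lower g w z i) x = partial i (\<lambda>z. lower g w z j) x"
    using partial_lower_sym_torse_forming[OF x] tfu tfw x by blast+
  ultimately show ?thesis unfolding hessian by (simp add: algebra_simps)
qed

text \<open>Both sides are \<open>div [u, w]\<close>: on the right by \<open>div [u, w] = u(div w) - w(div u)\<close> with
  \<open>div u = (n - 1) \<phi>\<close> and \<open>div w = (n - 1) \<lambda>\<close>, on the left by expanding
  \<open>[u, w] = (\<lambda> c - \<phi>) w + (\<lambda> - \<phi> c) u\<close>.\<close>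
lemma torse_forming_divergence_identity:
  assumes su: "smooth_vf_on U u" and sw: "smooth_vf_on U w"
    and sphi: "smooth_on U phi" and slam: "smooth_on U lam"
    and tfu: "\<forall>y\<in>U. torse_forming g u phi y" and tfw: "\<forall>y\<in>U. torse_forming g w lam y"
    and uu: "\<forall>y\<in>U. gprod g u u y = -1" and ww: "\<forall>y\<in>U. gprod g w w y = -1"
    and x: "x \<in> U"
  defines "c \<equiv> gprod g u w x" and "P \<equiv> grad (gprod g u w) x"
    and "a \<equiv> grad lam x" and "b \<equiv> grad phi x" and "N \<equiv> real CARD('n)"
  shows "w x \<bullet> (c *\<^sub>R a + lam x *\<^sub>R P - b) + (lam x * c - phi x) * (N - 1) * lam x
      + u x \<bullet> (a - c *\<^sub>R b - phi x *\<^sub>R P) + (lam x - phi x * c) * (N - 1) * phi x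
    = (N - 1) * (u x \<bullet> a - w x \<bullet> b)"
proof -
  have d: "phi differentiable (at x)" "lam differentiable (at x)"
      "gprod g u w differentiable (at x)"
      "(\<lambda>z. u z $ k) differentiable (at x)" "(\<lambda>z. w z $ k) differentiable (at x)" for k
    using smooth_on_differentiable_at[OF open_U _ x] sphi slam gprod_smooth[OF su sw]
      smooth_vf_on_differentiable[OF open_U su x] smooth_vf_on_differentiable[OF open_U sw x]
    by blast+
  have div_u: "divergence g u y = (N - 1) * phi y" and div_w: "divergence g w y = (N - 1) * lam y"
    if "y \<in> U" for y
    using divergence_torse_forming su sw tfu tfw uu ww that unfolding N_def by blast+
  have grad_div: "grad (divergence g u) x = (N - 1) *\<^sub>R b" "grad (divergence g w) x = (N - 1) *\<^sub>R a"
    using grad_cong[OF open_U x div_u] grad_cong[OF open_U x div_w] grad_cmult d(1,2)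
    unfolding a_def b_def by auto
  have "divergence g (lie_bracket u w) x = (N - 1) * (u x \<bullet> a - w x \<bullet> b)"
    unfolding divergence_lie_bracket[OF su sw x] grad_div by (simp add: algebra_simps)
  moreover have "divergence g (lie_bracket u w) x
      = w x \<bullet> (c *\<^sub>R a + lam x *\<^sub>R P - b) + (lam x * c - phi x) * (N - 1) * lam x
        + u x \<bullet> (a - c *\<^sub>R b - phi x *\<^sub>R P) + (lam x - phi x * c) * (N - 1) * phi x"
  proof -
    have grads: "grad (\<lambda>z. lam z * gprod g u w z - phi z) x = c *\<^sub>R a + lam x *\<^sub>R P - b"
        "grad (\<lambda>z. lam z - phi z * gprod g u w z) x = a - c *\<^sub>R b - phi x *\<^sub>R P"
      using d unfolding c_def P_def a_def b_def by (simp_all add: grad_mult grad_diff algebra_simps)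
    have "divergence g (lie_bracket u w) x = divergence g (\<lambda>z.
        (lam z * gprod g u w z - phi z) *\<^sub>R w z + (lam z - phi z * gprod g u w z) *\<^sub>R u z) x"
      using tfu tfw by (intro divergence_cong[OF open_U x] lie_bracket_torse_forming[OF su sw]) auto
    also have "\<dots> = (lam x * c - phi x) * divergence g w x + (lam x - phi x * c) * divergence g u x
        + w x \<bullet> grad (\<lambda>z. lam z * gprod g u w z - phi z) x
        + u x \<bullet> grad (\<lambda>z. lam z - phi z * gprod g u w z) x"
      unfolding c_def using d by (intro divergence_scaleR_add) auto
    finally show ?thesis unfolding grads div_u[OF x] div_w[OF x] by simp
  qed
  ultimately show ?thesis by simp
qed

end

section \<open>The pointwise algebra\<close>

lemma inner_contract_symmetric:
  fixes A B C D E F G H X :: "real^'n::finite"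
  assumes "\<And>i j. A$j * B$i + C$j * D$i + E$j * F$i + G$j * H$i
    = A$i * B$j + C$i * D$j + E$i * F$j + G$i * H$j"
  shows "(X \<bullet> A) *\<^sub>R B + (X \<bullet> C) *\<^sub>R D + (X \<bullet> E) *\<^sub>R F + (X \<bullet> G) *\<^sub>R H
    = (X \<bullet> B) *\<^sub>R A + (X \<bullet> D) *\<^sub>R C + (X \<bullet> F) *\<^sub>R E + (X \<bullet> H) *\<^sub>R G"
proof -
  have "(\<Sum>j\<in>UNIV. X$j * (A$j * B$i + C$j * D$i + E$j * F$i + G$j * H$i))
      = (\<Sum>j\<in>UNIV. X$j * (A$i * B$j + C$i * D$j + E$i * F$j + G$i * H$j))" for i
    using assms by simp
  then show ?thesis
    by (simp add: vec_eq_iff inner_vec_def sum_distrib_left sum_distrib_right sum.distrib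
        algebra_simps)
qed

text \<open>At a point: \<open>uu, ww\<close> are \<open>u, w\<close> and \<open>UU, WW\<close> their lowered forms, \<open>a, b, P\<close> are the
  gradients of \<open>\<lambda>, \<phi>, c\<close>. Contracting \<open>E1\<close> with \<open>w\<close> and then \<open>u\<close> gives \<open>w \<bullet> a\<close>, \<open>E2\<close> then
  gives \<open>u \<bullet> a\<close> (this needs \<open>n \<noteq> 2\<close>), and contracting \<open>E1\<close> with \<open>u\<close> alone solves for \<open>a\<close>
  (this needs \<open>c\<^sup>2 \<noteq> 1\<close>).\<close>
lemma gradient_collinear_from_integrability:
  fixes uu ww UU WW a b P :: "real^'n::finite" and c ph lm N :: real
  assumes h1: "uu \<bullet> UU = -1" and h2: "ww \<bullet> WW = -1" and h3: "uu \<bullet> WW = c" and h4: "ww \<bullet> UU = c"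
    and hb: "b = (- (uu \<bullet> b)) *\<^sub>R UU"
    and hP: "P = (ph*c + lm) *\<^sub>R UU + (ph + lm*c) *\<^sub>R WW"
    and E1: "\<And>i j. b$j*(c*UU$i + WW$i) + ph*P$j*UU$i + a$j*(c*WW$i + UU$i) + lm*P$j*WW$i
                 = b$i*(c*UU$j + WW$j) + ph*P$i*UU$j + a$i*(c*WW$j + UU$j) + lm*P$i*WW$j"
    and E2: "ww \<bullet> (c *\<^sub>R a + lm *\<^sub>R P - b) + (lm*c - ph)*(N-1)*lm + uu \<bullet> (a - c *\<^sub>R b - ph *\<^sub>R P)
              + (lm - ph*c)*(N-1)*ph = (N-1)*(uu \<bullet> a - ww \<bullet> b)"
    and hc: "c\<^sup>2 \<noteq> 1" and hN: "N \<noteq> 2"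
  shows "a = (- (ww \<bullet> a)) *\<^sub>R WW"
proof -
  define p where "p = uu \<bullet> b"
  have hc': "c\<^sup>2 - 1 \<noteq> 0" using hc by simp
  have ub: "uu \<bullet> b = p" and wb: "ww \<bullet> b = - p * c"
    unfolding p_def by (subst hb, simp add: h1 h4)+
  have uP: "uu \<bullet> P = lm * (c\<^sup>2 - 1)" and wP: "ww \<bullet> P = ph * (c\<^sup>2 - 1)"
    unfolding hP using h1 h2 h3 h4 by (simp_all add: inner_add_right power2_eq_square algebra_simps)
  have contract: "(X \<bullet> b) *\<^sub>R (c *\<^sub>R UU + WW) + (X \<bullet> P) *\<^sub>R (ph *\<^sub>R UU)
        + (X \<bullet> a) *\<^sub>R (c *\<^sub>R WW + UU) + (X \<bullet> P) *\<^sub>R (lm *\<^sub>R WW)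
      = (X \<bullet> (c *\<^sub>R UU + WW)) *\<^sub>R b + (X \<bullet> (ph *\<^sub>R UU)) *\<^sub>R P
        + (X \<bullet> (c *\<^sub>R WW + UU)) *\<^sub>R a + (X \<bullet> (lm *\<^sub>R WW)) *\<^sub>R P" for X
    by (rule inner_contract_symmetric) (use E1 in \<open>simp add: algebra_simps\<close>)
  have wa: "ww \<bullet> a = p + ph\<^sup>2 - lm\<^sup>2"
  proof -
    from arg_cong[where f = "\<lambda>v. uu \<bullet> v", OF contract[of ww]]
    have "(c\<^sup>2 - 1) * (ww \<bullet> a) = (c\<^sup>2 - 1) * (p + ph\<^sup>2 - lm\<^sup>2)"
      using h1 h2 h3 h4 ub wb uP wP
      by (simp add: inner_add_right power2_eq_square algebra_simps)
    with hc' show ?thesis by simp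
  qed
  have ua: "uu \<bullet> a = - c * (ww \<bullet> a)"
  proof -
    have "ww \<bullet> (c *\<^sub>R a + lm *\<^sub>R P - b) = c * (ww \<bullet> a) + lm * (ph * (c\<^sup>2 - 1)) + p * c"
      and "uu \<bullet> (a - c *\<^sub>R b - ph *\<^sub>R P) = uu \<bullet> a - c * p - ph * (lm * (c\<^sup>2 - 1))"
      using wP wb uP ub by (simp_all add: inner_add_right inner_diff_right)
    with E2 have "(N - 2) * (uu \<bullet> a) = (N - 2) * (- c * (ww \<bullet> a))"
      unfolding wb wa by (simp add: power2_eq_square algebra_simps)
    moreover have "N - 2 \<noteq> 0" using hN by simp
    ultimately show ?thesis by (metis mult_left_cancel)
  qed
  have "(c\<^sup>2 - 1) * a$i = (c\<^sup>2 - 1) * ((- (ww \<bullet> a)) * WW$i)" for i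
  proof -
    have "P$i = (ph*c + lm) * UU$i + (ph + lm*c) * WW$i" unfolding hP by simp
    with arg_cong[where f = "\<lambda>v. v $ i", OF contract[of uu]] show ?thesis
      using h1 h3 ub uP unfolding ua wa
      by (simp add: inner_add_right power2_eq_square algebra_simps)
  qed
  then have "a$i = (- (ww \<bullet> a)) * WW$i" for i
    using hc' by (metis mult_left_cancel)
  then show ?thesis by (simp add: vec_eq_iff)
qed

theorem mainTheorem4:
  fixes U :: "(real^'n::finite) set"
    and g :: "real^'n \<Rightarrow> real^'n^'n"
    and u w :: "real^'n \<Rightarrow> real^'n"
    and phi lam :: "real^'n \<Rightarrow> real"
  assumes dim: "CARD('n) > 3"
    and U: "open U"
    and metric: "lorentz_metric_on U g"
    and su: "smooth_vf_on U u" and sw: "smooth_vf_on U w"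
    and sphi: "smooth_on U phi" and slam: "smooth_on U lam"
    and uu: "\<forall>x\<in>U. gprod g u u x = -1"
    and ww: "\<forall>x\<in>U. gprod g w w x = -1"
    and uw: "\<forall>x\<in>U. (gprod g u w x)\<^sup>2 \<noteq> 1"
    and du: "\<forall>x\<in>U. \<forall>i j. cov_deriv g u x i j
               = phi x * (lower g u x i * lower g u x j + g x $ i $ j)"
    and dw: "\<forall>x\<in>U. \<forall>i j. cov_deriv g w x i j
               = lam x * (lower g w x i * lower g w x j + g x $ i $ j)"
    and dphi: "\<forall>x\<in>U. \<forall>i. partial i phi x
               = - lower g u x i * (\<Sum>k\<in>UNIV. u x $ k * partial k phi x)"
  shows "\<forall>x\<in>U. \<forall>i. partial i lam x
               = - lower g w x i * (\<Sum>k\<in>UNIV. w x $ k * partial k lam x)"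
proof -
  interpret lorentz_chart U g using U metric by unfold_locales
  have tfu: "\<forall>y\<in>U. torse_forming g u phi y" and tfw: "\<forall>y\<in>U. torse_forming g w lam y"
    using du dw unfolding torse_forming_def by blast+
  show ?thesis
  proof (intro ballI allI)
    fix x i
    assume x: "x \<in> U"
    have "grad lam x = - (w x \<bullet> grad lam x) *\<^sub>R covector g w x"
    proof (rule gradient_collinear_from_integrability)
      show "u x \<bullet> covector g u x = -1" "w x \<bullet> covector g w x = -1"
        "u x \<bullet> covector g w x = gprod g u w x" "w x \<bullet> covector g u x = gprod g u w x"
        using uu ww x gprod_sym[OF x, of w u] by (simp_all add: inner_covector)
      show "grad phi x = - (u x \<bullet> grad phi x) *\<^sub>R covector g u x"
        using dphi x by (subst grad_eq_scaleR_covector_iff) blast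
      show "grad (gprod g u w) x = (phi x * gprod g u w x + lam x) *\<^sub>R covector g u x
          + (phi x + lam x * gprod g u w x) *\<^sub>R covector g w x"
        using su sw x tfu tfw by (simp add: grad_gprod_torse_forming)
      show "(gprod g u w x)\<^sup>2 \<noteq> 1" "real CARD('n) \<noteq> 2" using uw x dim by auto
    qed (use torse_forming_gprod_integrability torse_forming_divergence_identity
           su sw sphi slam tfu tfw uu ww x in blast)+
    then show "partial i lam x = - lower g w x i * (\<Sum>k\<in>UNIV. w x $ k * partial k lam x)"
      using grad_eq_scaleR_covector_iff by blast
  qed
qed

end
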